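(* Suppose Assumption A1 and Assumption A2(ii) hold, let $K$ be $(\kappa,\gamma)$-strongly stable, $H=\lceil2\gamma^{-1}\log T\rceil$, and let $\{M_t\}_{t=-H-1}^0$ be arbitrary with $M_t\in\mathcal M$. Let $\{M_t\}_{t=1}^{T-1}$ be given by $M_{t+1}=\Pi_{\mathcal M}(M_t-\eta\nabla_Mf_t(M_t))$ with $\eta=(\sqrt T(\log T)^3)^{-1}$, where $\Pi_{\mathcal M}$ is the Frobenius projection onto $\mathcal M$. Let $D:=\frac{4\kappa_B\kappa^3\sqrt n}{\gamma}$ and $\sigma_w^{[1,4]}:=\max\{\sigma_w,\sigma_w^4\}$. Then for any $C>0$, $T\ge3$ and $M\in\mathcal M$, with probability at least $1-\frac{65640\sigma_w^{[1,4]}n^2G_c^2\kappa_B^6\kappa^{18}}{C\gamma^8(1-\gamma)^4}$, $$\sum_{t=0}^{T-1}F_t(M_{t-1-H},\dots,M_t)-\sum_{t=0}^{T-1}f_t(M)\le\Big(\frac{2\sqrt3G_cC^3}{\sqrt\gamma}+\frac{D^2}2\Big)\sqrt T(\log T)^3+\frac C2\sqrt T\log T.$$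
   Context: Linear system $x_{t+1}=Ax_t+Bu_t+w_t$; $n:=\max\{n_x,n_u\}$, $\kappa_B:=\max\{\|B\|,1\}$; $w_s:=0$ for $s<0$. $(\kappa,\gamma)$-strong stability: complex $P,Q$ with $A-BK=QPQ^{-1}$, $\|P\|\le1-\gamma$, $\|K\|,\|Q\|,\|Q^{-1}\|\le\kappa$. $A_K:=A-BK$. Assumption A1: $c_t$ convex, differentiable, $\|\nabla_xc_t(x,u)\|\le G_c\|x\|$, $\|\nabla_uc_t(x,u)\|\le G_c\|u\|$, $G_c\ge1$. Assumption A2(ii): $\mathbb E\|w_t\|^4\le\sigma_w^4$ (which implies $\mathbb E\|w_t\|\le\sigma_w$). For $M=\{M^{[0]},\dots,M^{[H-1]}\}$, $\|M\|_F:=\|[M^{[0]},\dots,M^{[H-1]}]\|_F$; $\mathcal M:=\{M:\|M^{[i]}\|\le2\kappa_B\kappa^3(1-\gamma)^i\}$. Surrogate: $\Psi^{K,h}_{t,i}(M_{t-h:t}):=A_K^i\mathbf 1_{i\le h}+\sum_{j=0}^hA_K^jBM_{t-j}^{[i-j-1]}\mathbf 1_{i-j\in[1,H]}$; $y_t:=\sum_{i=0}^{2H}\Psi^{K,H}_{t-1,i}(M_{t-1-H:t-1})w_{t-1-i}$; $v_t:=-Ky_t+\sum_{i=1}^HM_t^{[i-1]}w_{t-i}$; $F_t(M_{t-1-H:t}):=c_t(y_t,v_t)$; $f_t(M):=F_t(M,\dots,M)$. *)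

theory Defs
  imports "HOL-Analysis.Analysis" "HOL-Probability.Probability"
begin

definition opnorm :: "'a::{real_normed_vector,semiring_1} ^'n::finite ^'m::finite \<Rightarrow> real" where
  "opnorm X = onorm (\<lambda>v. X *v v)"

primrec mpow :: "real ^'n::finite ^'n \<Rightarrow> nat \<Rightarrow> real ^'n ^'n" where
  "mpow X 0 = mat 1"
| "mpow X (Suc k) = X ** mpow X k"

definition cmat :: "real ^'n::finite ^'m::finite \<Rightarrow> complex ^'n ^'m" where
  "cmat X = (\<chi> i j. complex_of_real (X $ i $ j))"

definition strongly_stable ::
  "real \<Rightarrow> real \<Rightarrow> real ^'nx::finite ^'nx \<Rightarrow> real ^'nu::finite ^'nx \<Rightarrow> real ^'nx ^'nu \<Rightarrow> bool" where
  "strongly_stable \<kappa> \<gamma> A B K \<longleftrightarrow>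
     (\<exists>P Q Qi :: complex ^'nx ^'nx.
        Q ** Qi = mat 1 \<and> Qi ** Q = mat 1 \<and>
        cmat (A - B ** K) = Q ** P ** Qi \<and>
        opnorm P \<le> 1 - \<gamma> \<and> opnorm K \<le> \<kappa> \<and> opnorm Q \<le> \<kappa> \<and> opnorm Qi \<le> \<kappa>)"

definition kappaB :: "real ^'nu::finite ^'nx::finite \<Rightarrow> real" where
  "kappaB B = max (opnorm B) 1"

definition cost_assm :: "real \<Rightarrow> (nat \<Rightarrow> real ^'nx::finite \<Rightarrow> real ^'nu::finite \<Rightarrow> real) \<Rightarrow> bool" where
  "cost_assm Gc c \<longleftrightarrow> Gc \<ge> 1 \<and>
     (\<forall>t. convex_on UNIV (\<lambda>(x,u). c t x u) \<and>
       (\<forall>x u. \<exists>gx gu. ((\<lambda>(x',u'). c t x' u') has_derivative (\<lambda>(dx,du). gx \<bullet> dx + gu \<bullet> du)) (at (x,u))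
              \<and> norm gx \<le> Gc * norm x \<and> norm gu \<le> Gc * norm u))"

(* a policy M = {M^[0],...,M^[H-1]} is a function nat => matrix (entries >= H are irrelevant / zero) *)
type_synonym ('nx,'nu) pol = "nat \<Rightarrow> real ^'nx ^'nu"

definition Mset :: "nat \<Rightarrow> real \<Rightarrow> real \<Rightarrow> real \<Rightarrow> ('nx::finite,'nu::finite) pol set" where
  "Mset H kB \<kappa> \<gamma> = {M. (\<forall>i<H. opnorm (M i) \<le> 2 * kB * \<kappa>^3 * (1 - \<gamma>)^i) \<and> (\<forall>i\<ge>H. M i = 0)}"

definition frob :: "nat \<Rightarrow> ('nx::finite,'nu::finite) pol \<Rightarrow> real" where
  "frob H M = sqrt (\<Sum>i<H. \<Sum>r\<in>UNIV. \<Sum>s\<in>UNIV. (M i $ r $ s)^2)"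

definition proj :: "nat \<Rightarrow> ('nx::finite,'nu::finite) pol set \<Rightarrow> ('nx,'nu) pol \<Rightarrow> ('nx,'nu) pol" where
  "proj H S X = (SOME P. P \<in> S \<and> (\<forall>Q\<in>S. frob H (\<lambda>i. P i - X i) \<le> frob H (\<lambda>i. Q i - X i)))"

definition wz :: "(nat \<Rightarrow> 'w \<Rightarrow> real ^'nx) \<Rightarrow> 'w \<Rightarrow> int \<Rightarrow> real ^'nx" where
  "wz w \<omega> s = (if s < 0 then 0 else w (nat s) \<omega>)"

(* surrogate transfer matrix Psi^{K,h}_{t,i}(M_{t-h:t}); Ms s = M_s *)
definition Psi :: "real ^'nx::finite ^'nx \<Rightarrow> real ^'nu::finite ^'nx \<Rightarrow> real ^'nx ^'nu \<Rightarrow> nat \<Rightarrow> nat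
                   \<Rightarrow> (int \<Rightarrow> ('nx,'nu) pol) \<Rightarrow> int \<Rightarrow> nat \<Rightarrow> real ^'nx ^'nx" where
  "Psi A B K H h Ms t i =
     (if i \<le> h then mpow (A - B ** K) i else 0) +
     (\<Sum>j\<in>{0..h}. if 1 \<le> i - j \<and> i - j \<le> H
                   then mpow (A - B ** K) j ** B ** (Ms (t - int j)) (i - j - 1) else 0)"

definition ysur where
  "ysur A B K H w Ms t \<omega> =
     (\<Sum>i\<in>{0..2*H}. Psi A B K H H Ms (t - 1) i *v wz w \<omega> (t - 1 - int i))"

definition vsur where
  "vsur A B K H w Ms t \<omega> =
     - (K *v ysur A B K H w Ms t \<omega>) + (\<Sum>i\<in>{1..H}. (Ms t) (i - 1) *v wz w \<omega> (t - int i))"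

definition Fsur where
  "Fsur A B K H c w Ms t \<omega> = c t (ysur A B K H w Ms (int t) \<omega>) (vsur A B K H w Ms (int t) \<omega>)"

definition fsur where
  "fsur A B K H c w t M \<omega> = Fsur A B K H c w (\<lambda>_. M) t \<omega>"

definition Emat :: "'nu::finite \<Rightarrow> 'nx::finite \<Rightarrow> real ^'nx ^'nu" where
  "Emat r s = (\<chi> a b. if a = r \<and> b = s then 1 else 0)"

definition gradM :: "nat \<Rightarrow> (('nx::finite,'nu::finite) pol \<Rightarrow> real) \<Rightarrow> ('nx,'nu) pol \<Rightarrow> ('nx,'nu) pol" where
  "gradM H g M = (\<lambda>i. if i < H then
       (\<chi> r s. deriv (\<lambda>e. g (\<lambda>k. if k = i then M k + e *\<^sub>R Emat r s else M k)) 0) else 0)"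

primrec ogd where
  "ogd A B K H c w \<eta> S M0 0 \<omega> = M0"
| "ogd A B K H c w \<eta> S M0 (Suc t) \<omega> =
     (let Mt = ogd A B K H c w \<eta> S M0 t \<omega>;
          G = gradM H (\<lambda>M. fsur A B K H c w t M \<omega>) Mt
      in proj H S (\<lambda>i. Mt i - \<eta> *\<^sub>R G i))"

definition Mfull where
  "Mfull A B K H c w \<eta> S Minit \<omega> s =
     (if s \<le> 0 then Minit s else ogd A B K H c w \<eta> S (Minit 0) (nat s) \<omega>)"

end

(* Projected gradient descent on the surrogate costs f_t enjoys the usual online-gradient
   regret bound D^2/(2 eta) + eta/2 * sum |grad f_t|^2, because f_t is the convex cost c_t composed
   with an affine function of M.  The actual costs F_t differ from f_t(M_t) by at most a Lipschitz
   constant times the drift of the iterates over the last H+1 steps.  All these quantities are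
   controlled by the largest disturbance N_t in a window of length 3H+2: gradients are O(N_t^2),
   and the drift is O(eta N_t^2), plus the diameter of the constraint set during the first H
   steps.  Hence the regret is at most D^2/(2 eta) + eta Lambda sum_{s<T} |w_s|^4 plus a term in
   sum_{s<H} |w_s|^4 balanced by Young's inequality, and Markov's inequality for these two
   fourth-moment sums yields the bound with the stated probability. *)

theory Submission
  imports Defs
begin

section \<open>Operator norm\<close>

lemma opnorm_nonneg: "0 \<le> opnorm (X :: 'a::{euclidean_space,real_algebra_1}^'n::finite^'m::finite)"
  unfolding opnorm_def by (rule onorm_pos_le) simp

lemma norm_mv_le_opnorm:
  "norm (X *v v) \<le> opnorm (X :: 'a::{euclidean_space,real_algebra_1}^'n::finite^'m::finite) * norm v"
  unfolding opnorm_def by (rule onorm) simp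

lemma opnorm_leI:
  assumes "0 \<le> b" "\<And>v. norm (X *v v) \<le> b * norm v"
  shows "opnorm (X :: 'a::{euclidean_space,real_algebra_1}^'n::finite^'m::finite) \<le> b"
  unfolding opnorm_def by (rule onorm_bound) (use assms in auto)

lemma opnorm_matrix_mult_le:
  "opnorm ((X :: 'a::{euclidean_space,real_algebra_1}^'n::finite^'m::finite) ** (Y :: 'a^'k::finite^'n))
     \<le> opnorm X * opnorm Y"
proof (rule opnorm_leI)
  show "0 \<le> opnorm X * opnorm Y" by (simp add: opnorm_nonneg)
  fix v
  have "norm ((X ** Y) *v v) = norm (X *v (Y *v v))" by (simp add: matrix_vector_mul_assoc)
  also have "\<dots> \<le> opnorm X * norm (Y *v v)" by (rule norm_mv_le_opnorm)
  also have "\<dots> \<le> opnorm X * (opnorm Y * norm v)"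
    by (rule mult_left_mono[OF norm_mv_le_opnorm opnorm_nonneg])
  finally show "norm ((X ** Y) *v v) \<le> opnorm X * opnorm Y * norm v" by (simp add: mult.assoc)
qed

lemma opnorm_add_le:
  "opnorm ((X :: 'a::{euclidean_space,real_algebra_1}^'n::finite^'m::finite) + Y) \<le> opnorm X + opnorm Y"
proof (rule opnorm_leI)
  show "0 \<le> opnorm X + opnorm Y" by (simp add: opnorm_nonneg)
  fix v
  have "norm ((X + Y) *v v) \<le> norm (X *v v) + norm (Y *v v)"
    by (simp add: matrix_vector_mult_add_rdistrib norm_triangle_ineq)
  also have "\<dots> \<le> opnorm X * norm v + opnorm Y * norm v"
    by (intro add_mono norm_mv_le_opnorm)
  finally show "norm ((X + Y) *v v) \<le> (opnorm X + opnorm Y) * norm v" by (simp add: algebra_simps)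
qed

lemma opnorm_scaleR_le:
  "opnorm (c *\<^sub>R (X :: 'a::{euclidean_space,real_algebra_1}^'n::finite^'m::finite)) \<le> \<bar>c\<bar> * opnorm X"
proof (rule opnorm_leI)
  show "0 \<le> \<bar>c\<bar> * opnorm X" by (simp add: opnorm_nonneg)
  fix v
  have "(c *\<^sub>R X) *v v = c *\<^sub>R (X *v v)"
    by (simp add: vec_eq_iff matrix_vector_mult_def scaleR_sum_right)
  then have "norm ((c *\<^sub>R X) *v v) = \<bar>c\<bar> * norm (X *v v)" by simp
  also have "\<dots> \<le> \<bar>c\<bar> * (opnorm X * norm v)" by (intro mult_left_mono norm_mv_le_opnorm) auto
  finally show "norm ((c *\<^sub>R X) *v v) \<le> \<bar>c\<bar> * opnorm X * norm v" by (simp add: mult.assoc)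
qed

lemma opnorm_zero [simp]: "opnorm (0 :: 'a::{euclidean_space,real_algebra_1}^'n::finite^'m::finite) = 0"
  using opnorm_leI[of 0 "0 :: 'a^'n^'m"] opnorm_nonneg[of "0 :: 'a^'n^'m"] by simp

lemma opnorm_mat_1 [simp]: "opnorm (mat 1 :: 'a::{euclidean_space,real_algebra_1}^'n::finite^'n) = 1"
proof -
  have "(*v) (mat 1 :: 'a^'n^'n) = (\<lambda>x. x)" by (rule ext) simp
  then show ?thesis unfolding opnorm_def by (simp add: onorm_id)
qed

lemma opnorm_sum_le:
  "finite S \<Longrightarrow> opnorm (\<Sum>i\<in>S. (f i :: 'a::{euclidean_space,real_algebra_1}^'n::finite^'m::finite))
     \<le> (\<Sum>i\<in>S. opnorm (f i))"
proof (induction S rule: finite_induct)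
  case (insert x F)
  then show ?case using opnorm_add_le[of "f x" "sum f F"] by simp
qed simp

lemma norm_sum_mv_le:
  "finite S \<Longrightarrow> norm (\<Sum>i\<in>S. (P i :: real^'n::finite^'m::finite) *v v i) \<le> (\<Sum>i\<in>S. opnorm (P i) * norm (v i))"
  by (rule order.trans[OF norm_sum sum_mono]) (rule norm_mv_le_opnorm)

lemma norm_mv_le_norm: "norm (X *v v) \<le> norm (X :: real^'n::finite^'m::finite) * norm v"
proof -
  have "(norm (X *v v))^2 = (\<Sum>i\<in>UNIV. (X$i \<bullet> v)^2)"
    unfolding power2_norm_eq_inner by (simp add: inner_vec_def matrix_vector_mult_def power2_eq_square)
  also have "\<dots> \<le> (\<Sum>i\<in>UNIV. (norm (X$i))^2 * (norm v)^2)"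
  proof (rule sum_mono)
    fix i
    have "\<bar>X$i \<bullet> v\<bar>^2 \<le> (norm (X$i) * norm v)^2"
      by (rule power_mono[OF Cauchy_Schwarz_ineq2]) simp
    then show "(X$i \<bullet> v)^2 \<le> (norm (X$i))^2 * (norm v)^2" by (simp add: power_mult_distrib)
  qed
  also have "\<dots> = (\<Sum>i\<in>UNIV. (norm (X$i))^2) * (norm v)^2" by (simp add: sum_distrib_right)
  also have "(\<Sum>i\<in>UNIV. (norm (X$i))^2) = (norm X)^2"
    unfolding power2_norm_eq_inner by (simp add: inner_vec_def)
  also have "(norm X)^2 * (norm v)^2 = (norm X * norm v)^2" by (simp add: power_mult_distrib)
  finally show ?thesis by (rule power2_le_imp_le) simp
qed

lemma opnorm_le_norm: "opnorm (X :: real^'n::finite^'m::finite) \<le> norm X"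
  by (rule opnorm_leI) (auto simp: norm_mv_le_norm)

lemma norm_le_sqrt_card_opnorm: "norm (X :: real^'n::finite^'m::finite) \<le> sqrt (real CARD('n)) * opnorm X"
proof -
  have "(norm X)^2 = (\<Sum>s\<in>UNIV. (norm (column s X))^2)"
    unfolding power2_norm_eq_inner
    by (simp add: inner_vec_def power2_eq_square column_def sum.swap[of _ "UNIV :: 'm set"])
  also have "\<dots> \<le> (\<Sum>s\<in>(UNIV::'n set). (opnorm X)^2)"
    by (intro sum_mono power_mono) (auto simp: opnorm_def norm_column_le_onorm)
  also have "\<dots> = (sqrt (real CARD('n)) * opnorm X)^2" by (simp add: power_mult_distrib)
  finally show ?thesis
    by (rule power2_le_imp_le) (simp add: opnorm_nonneg)
qed

lemma opnorm_Emat_le: "opnorm (Emat r s) \<le> 1"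
proof (rule opnorm_leI)
  fix v
  have "(Emat r s *v v) $ a = ((v$s) *\<^sub>R axis r 1) $ a" for a
  proof -
    have "(Emat r s *v v) $ a = (\<Sum>b\<in>UNIV. (if a = r then (if b = s then v $ b else 0) else 0))"
      by (auto simp: Emat_def matrix_vector_mult_def intro!: sum.cong)
    then show ?thesis by (simp add: axis_def)
  qed
  then have "Emat r s *v v = (v$s) *\<^sub>R axis r 1" by (simp add: vec_eq_iff)
  then show "norm (Emat r s *v v) \<le> 1 * norm v" by (simp add: component_le_norm_cart)
qed simp

section \<open>Strong stability\<close>

primrec cpow :: "complex ^'n::finite ^'n \<Rightarrow> nat \<Rightarrow> complex ^'n ^'n" where
  "cpow X 0 = mat 1"
| "cpow X (Suc k) = X ** cpow X k"

definition cvec :: "real^'n::finite \<Rightarrow> complex^'n" where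
  "cvec v = (\<chi> i. complex_of_real (v$i))"

lemma cmat_mult: "cmat ((X :: real^'n::finite^'m::finite) ** (Y :: real^'k::finite^'n)) = cmat X ** cmat Y"
  by (simp add: cmat_def matrix_matrix_mult_def vec_eq_iff)

lemma cmat_one: "cmat (mat 1 :: real^'n::finite^'n) = mat 1"
  by (simp add: cmat_def mat_def vec_eq_iff)

lemma cmat_mpow: "cmat (mpow X k) = cpow (cmat X) k"
  by (induction k) (simp_all add: cmat_one cmat_mult)

lemma norm_cvec: "norm (cvec v) = norm v"
  by (simp add: cvec_def norm_vec_def)

lemma cmat_mv: "cmat X *v cvec v = cvec (X *v v)"
  by (simp add: cmat_def cvec_def matrix_vector_mult_def vec_eq_iff)

lemma opnorm_le_opnorm_cmat: "opnorm (X :: real^'n::finite^'m::finite) \<le> opnorm (cmat X)"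
proof (rule opnorm_leI)
  show "0 \<le> opnorm (cmat X)" by (rule opnorm_nonneg)
  fix v
  have "norm (X *v v) = norm (cmat X *v cvec v)" by (simp add: cmat_mv norm_cvec)
  also have "\<dots> \<le> opnorm (cmat X) * norm (cvec v)" by (rule norm_mv_le_opnorm)
  finally show "norm (X *v v) \<le> opnorm (cmat X) * norm v" by (simp add: norm_cvec)
qed

lemma cpow_similar:
  assumes "Q ** Qi = mat 1" "Qi ** Q = mat 1"
  shows "cpow (Q ** P ** Qi) k = Q ** cpow P k ** Qi"
proof (induction k)
  case 0 then show ?case using assms by simp
next
  case (Suc k)
  have "cpow (Q ** P ** Qi) (Suc k) = Q ** P ** Qi ** (Q ** cpow P k ** Qi)" using Suc by simp
  also have "\<dots> = Q ** P ** (Qi ** Q) ** cpow P k ** Qi" by (simp add: matrix_mul_assoc)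
  also have "\<dots> = Q ** cpow P (Suc k) ** Qi" using assms by (simp add: matrix_mul_assoc)
  finally show ?case .
qed

lemma opnorm_cpow_le: "opnorm (cpow P k) \<le> opnorm P ^ k"
proof (induction k)
  case 0 then show ?case by simp
next
  case (Suc k)
  have "opnorm (cpow P (Suc k)) \<le> opnorm P * opnorm (cpow P k)" by (simp add: opnorm_matrix_mult_le)
  also have "\<dots> \<le> opnorm P * opnorm P ^ k" by (intro mult_left_mono Suc opnorm_nonneg)
  finally show ?case by simp
qed

text \<open>\<open>A - B K = Q P Q\<^sup>-\<^sup>1\<close> gives \<open>(A - B K)\<^sup>j = Q P\<^sup>j Q\<^sup>-\<^sup>1\<close>, hence the geometric decay;
  and \<open>1 = \<parallel>Q Q\<^sup>-\<^sup>1\<parallel> \<le> \<kappa>\<^sup>2\<close> forces \<open>\<kappa> \<ge> 1\<close>.\<close>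

lemma strongly_stableD:
  assumes "strongly_stable \<kappa> \<gamma> (A :: real ^'nx::finite ^'nx) (B :: real ^'nu::finite ^'nx) K" "\<gamma> < 1"
  shows "1 \<le> \<kappa>" "opnorm K \<le> \<kappa>"
    "\<And>j. opnorm (mpow (A - B ** K) j) \<le> \<kappa>^2 * (1 - \<gamma>)^j"
proof -
  obtain P Q Qi :: "complex ^'nx ^'nx" where h: "Q ** Qi = mat 1" "Qi ** Q = mat 1"
    "cmat (A - B ** K) = Q ** P ** Qi" "opnorm P \<le> 1 - \<gamma>" "opnorm K \<le> \<kappa>" "opnorm Q \<le> \<kappa>" "opnorm Qi \<le> \<kappa>"
    using assms(1) unfolding strongly_stable_def by blast
  show "opnorm K \<le> \<kappa>" by (rule h)
  have k0: "0 \<le> \<kappa>" using h(6) opnorm_nonneg[of Q] by linarith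
  have "1 = opnorm (Q ** Qi)" using h(1) by simp
  also have "\<dots> \<le> opnorm Q * opnorm Qi" by (rule opnorm_matrix_mult_le)
  also have "\<dots> \<le> \<kappa> * \<kappa>" by (intro mult_mono h opnorm_nonneg k0)
  finally have "1 \<le> \<kappa> * \<kappa>" .
  then show "1 \<le> \<kappa>"
  proof (rule contrapos_pp)
    assume "\<not> 1 \<le> \<kappa>"
    then have "\<kappa> * \<kappa> \<le> \<kappa> * 1" by (intro mult_left_mono) (use k0 in auto)
    then show "\<not> 1 \<le> \<kappa> * \<kappa>" using \<open>\<not> 1 \<le> \<kappa>\<close> by linarith
  qed
  fix j
  have "opnorm (mpow (A - B ** K) j) \<le> opnorm (cmat (mpow (A - B ** K) j))" by (rule opnorm_le_opnorm_cmat)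
  also have "cmat (mpow (A - B ** K) j) = Q ** cpow P j ** Qi"
    by (simp add: cmat_mpow h(3) cpow_similar[OF h(1,2)])
  also have "opnorm (Q ** cpow P j ** Qi) \<le> opnorm (Q ** cpow P j) * opnorm Qi" by (rule opnorm_matrix_mult_le)
  also have "\<dots> \<le> (opnorm Q * opnorm (cpow P j)) * opnorm Qi"
    by (intro mult_right_mono opnorm_matrix_mult_le opnorm_nonneg)
  also have "\<dots> \<le> (\<kappa> * (1 - \<gamma>)^j) * \<kappa>"
  proof (intro mult_mono h k0 opnorm_nonneg mult_nonneg_nonneg)
    have "opnorm (cpow P j) \<le> opnorm P ^ j" by (rule opnorm_cpow_le)
    also have "\<dots> \<le> (1 - \<gamma>)^j" by (intro power_mono h opnorm_nonneg)
    finally show "opnorm (cpow P j) \<le> (1 - \<gamma>)^j" .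
  qed (use assms(2) in auto)
  finally show "opnorm (mpow (A - B ** K) j) \<le> \<kappa>^2 * (1 - \<gamma>)^j" by (simp add: power2_eq_square algebra_simps)
qed

section \<open>Linear structure of the surrogate\<close>

definition pol_linear :: "nat \<Rightarrow> (('nx::finite,'nu::finite) pol \<Rightarrow> 'v::real_vector) \<Rightarrow> bool" where
  "pol_linear H L \<longleftrightarrow> (\<forall>X Y. L (\<lambda>k. X k + Y k) = L X + L Y) \<and> (\<forall>a X. L (\<lambda>k. a *\<^sub>R X k) = a *\<^sub>R L X)
      \<and> (\<forall>X Y. (\<forall>k<H. X k = Y k) \<longrightarrow> L X = L Y)"

lemma pol_linearI:
  assumes "\<And>X Y. L (\<lambda>k. X k + Y k) = L X + L Y" "\<And>a X. L (\<lambda>k. a *\<^sub>R X k) = a *\<^sub>R L X"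
    "\<And>X Y. (\<And>k. k<H \<Longrightarrow> X k = Y k) \<Longrightarrow> L X = L Y"
  shows "pol_linear H L"
  using assms unfolding pol_linear_def by blast

lemma pol_linear_add: "pol_linear H L \<Longrightarrow> L (\<lambda>k. X k + Y k) = L X + L Y"
  and pol_linear_scaleR: "pol_linear H L \<Longrightarrow> L (\<lambda>k. a *\<^sub>R X k) = a *\<^sub>R L X"
  and pol_linear_cong: "pol_linear H L \<Longrightarrow> (\<And>k. k < H \<Longrightarrow> X k = Y k) \<Longrightarrow> L X = L Y"
  unfolding pol_linear_def by blast+

lemma pol_linear_diff:
  assumes "pol_linear H L" shows "L (\<lambda>k. X k - Y k) = L X - L Y"
  using pol_linear_add[OF assms, of X "\<lambda>k. (-1) *\<^sub>R Y k"] pol_linear_scaleR[OF assms, of "-1" Y] by simp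

lemma pol_linear_sum:
  assumes "pol_linear H L" "finite F"
  shows "L (\<lambda>k. \<Sum>x\<in>F. f x k) = (\<Sum>x\<in>F. L (f x))"
  using assms(2)
proof (induction F rule: finite_induct)
  case empty then show ?case using pol_linear_scaleR[OF assms(1), of 0 "\<lambda>_. 0"] by simp
next
  case (insert x F)
  then show ?case
    using pol_linear_add[OF assms(1), of "f x" "\<lambda>k. \<Sum>x\<in>F. f x k"] by simp
qed

lemma pol_linear_inner:
  assumes "pol_linear H L1" "pol_linear H L2"
  shows "pol_linear H (\<lambda>D. gx \<bullet> L1 D + gu \<bullet> L2 D)"
proof (rule pol_linearI)
  fix X Y show "gx \<bullet> L1 (\<lambda>k. X k + Y k) + gu \<bullet> L2 (\<lambda>k. X k + Y k) = gx \<bullet> L1 X + gu \<bullet> L2 X + (gx \<bullet> L1 Y + gu \<bullet> L2 Y)"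
    by (simp add: pol_linear_add[OF assms(1)] pol_linear_add[OF assms(2)] inner_add_right)
next
  fix a X show "gx \<bullet> L1 (\<lambda>k. a *\<^sub>R X k) + gu \<bullet> L2 (\<lambda>k. a *\<^sub>R X k) = a *\<^sub>R (gx \<bullet> L1 X + gu \<bullet> L2 X)"
    by (simp add: pol_linear_scaleR[OF assms(1)] pol_linear_scaleR[OF assms(2)] algebra_simps)
next
  fix X Y :: "('a,'b) pol" assume "\<And>k. k < H \<Longrightarrow> X k = Y k"
  then show "gx \<bullet> L1 X + gu \<bullet> L2 X = gx \<bullet> L1 Y + gu \<bullet> L2 Y"
    using pol_linear_cong[OF assms(1)] pol_linear_cong[OF assms(2)] by metis
qed

lemma Emat_expansion: "(\<Sum>r\<in>UNIV. \<Sum>s\<in>UNIV. (X $ r $ s) *\<^sub>R Emat r s) = X"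
proof -
  have "(\<Sum>r\<in>UNIV. \<Sum>s\<in>UNIV. (X $ r $ s) *\<^sub>R Emat r s) $ a $ b = X $ a $ b" for a b
  proof -
    have "(\<Sum>r\<in>UNIV. \<Sum>s\<in>UNIV. (X $ r $ s) *\<^sub>R Emat r s) $ a $ b
        = (\<Sum>r\<in>UNIV. \<Sum>s\<in>UNIV. X $ r $ s * (if a = r \<and> b = s then 1 else 0))"
      by (simp add: Emat_def sum_component)
    also have "\<dots> = (\<Sum>r\<in>UNIV. \<Sum>s\<in>UNIV. (if a = r then (if b = s then X $ r $ s else 0) else 0))"
      by (intro sum.cong refl) auto
    also have "\<dots> = (\<Sum>r\<in>UNIV. (if a = r then (\<Sum>s\<in>UNIV. if b = s then X $ r $ s else 0) else 0))"
      by (intro sum.cong refl) auto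
    also have "\<dots> = X $ a $ b" by simp
    finally show ?thesis .
  qed
  then show ?thesis by (simp add: vec_eq_iff)
qed

definition pol_unit :: "nat \<Rightarrow> 'nu::finite \<Rightarrow> 'nx::finite \<Rightarrow> ('nx,'nu) pol" where
  "pol_unit i r s = (\<lambda>k. if k = i then Emat r s else 0)"

lemma opnorm_pol_unit_le: "opnorm (pol_unit i r s k) \<le> (if k = i then 1 else 0)"
  by (simp add: pol_unit_def opnorm_Emat_le)

lemma pol_linear_expansion:
  assumes "pol_linear H L"
  shows "L X = (\<Sum>k<H. \<Sum>r\<in>UNIV. \<Sum>s\<in>UNIV. (X k $ r $ s) *\<^sub>R L (pol_unit k r s))"
proof -
  let ?Z = "\<lambda>k'. \<Sum>k<H. \<Sum>r\<in>UNIV. \<Sum>s\<in>UNIV. (X k $ r $ s) *\<^sub>R pol_unit k r s k'"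
  have "?Z k' = X k'" if "k' < H" for k'
  proof -
    have "?Z k' = (\<Sum>k<H. if k = k' then (\<Sum>r\<in>UNIV. \<Sum>s\<in>UNIV. (X k $ r $ s) *\<^sub>R Emat r s) else 0)"
      by (intro sum.cong) (auto simp: pol_unit_def)
    then show ?thesis using that by (simp add: Emat_expansion)
  qed
  then have "L X = L ?Z" by (intro pol_linear_cong[OF assms]) simp
  also have "\<dots> = (\<Sum>k<H. \<Sum>r\<in>UNIV. \<Sum>s\<in>UNIV. L (\<lambda>k'. (X k $ r $ s) *\<^sub>R pol_unit k r s k'))"
    by (simp only: pol_linear_sum[OF assms] finite_lessThan finite)
  also have "\<dots> = (\<Sum>k<H. \<Sum>r\<in>UNIV. \<Sum>s\<in>UNIV. (X k $ r $ s) *\<^sub>R L (pol_unit k r s))"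
    by (simp only: pol_linear_scaleR[OF assms])
  finally show ?thesis .
qed

lemma convex_on_above_tangent:
  fixes g :: "'a::real_normed_vector \<Rightarrow> real"
  assumes cv: "convex_on UNIV g" and dg: "(g has_derivative g') (at z)"
  shows "g z + g' (z' - z) \<le> g z'"
proof -
  define d where "d = z' - z"
  define \<phi> where "\<phi> = (\<lambda>e::real. g (z + e *\<^sub>R d))"
  have lin: "linear g'" using has_derivative_bounded_linear[OF dg] by (rule bounded_linear.linear)
  have d1: "((\<lambda>e::real. z + e *\<^sub>R d) has_derivative (\<lambda>e. e *\<^sub>R d)) (at 0)"
    by (intro derivative_eq_intros) auto
  have dg0: "(g has_derivative g') (at ((\<lambda>e::real. z + e *\<^sub>R d) 0))" using dg by simp
  have "(\<phi> has_derivative (\<lambda>e. g' (e *\<^sub>R d))) (at 0)"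
    unfolding \<phi>_def using has_derivative_compose[OF d1 dg0] by simp
  moreover have "(\<lambda>e. g' (e *\<^sub>R d)) = (*) (g' d)"
    using lin by (simp add: fun_eq_iff linear_scale mult.commute)
  ultimately have der: "(\<phi> has_real_derivative g' d) (at 0)"
    by (simp only: has_field_derivative_def)
  have cvp: "convex_on UNIV \<phi>"
  proof (rule convex_onI)
    fix t x y :: real
    assume "0 < t" "t < 1"
    have "\<phi> ((1 - t) *\<^sub>R x + t *\<^sub>R y) = g ((1 - t) *\<^sub>R (z + x *\<^sub>R d) + t *\<^sub>R (z + y *\<^sub>R d))"
      unfolding \<phi>_def by (simp add: algebra_simps)
    also have "\<dots> \<le> (1 - t) * g (z + x *\<^sub>R d) + t * g (z + y *\<^sub>R d)"
      using convex_onD[OF cv, of t] \<open>0 < t\<close> \<open>t < 1\<close> by simp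
    finally show "\<phi> ((1 - t) *\<^sub>R x + t *\<^sub>R y) \<le> (1 - t) * \<phi> x + t * \<phi> y" unfolding \<phi>_def .
  qed simp
  have "\<phi> 1 - \<phi> 0 \<ge> g' d * (1 - 0)"
    by (rule convex_on_imp_above_tangent[OF cvp]) (auto intro: has_field_derivative_at_within[OF der])
  then show ?thesis unfolding \<phi>_def d_def by simp
qed

lemma cost_assm_Gc_ge_1: "cost_assm Gc c \<Longrightarrow> 1 \<le> Gc"
  unfolding cost_assm_def by simp

lemma cost_assm_diff_le:
  assumes "cost_assm Gc c"
  shows "c t x u - c t x' u' \<le> Gc * (norm x * norm (x - x') + norm u * norm (u - u'))"
proof -
  obtain gx gu where dg: "((\<lambda>(x,u). c t x u) has_derivative (\<lambda>(dx,du). gx \<bullet> dx + gu \<bullet> du)) (at (x,u))"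
    and gx: "norm gx \<le> Gc * norm x" and gu: "norm gu \<le> Gc * norm u"
    using assms unfolding cost_assm_def by blast
  have "convex_on UNIV (\<lambda>(x,u). c t x u)" using assms unfolding cost_assm_def by blast
  from convex_on_above_tangent[OF this dg, of "(x',u')"]
  have "c t x u - c t x' u' \<le> gx \<bullet> (x - x') + gu \<bullet> (u - u')"
    by (simp add: inner_diff_right)
  also have "\<dots> \<le> norm gx * norm (x - x') + norm gu * norm (u - u')"
    by (intro add_mono order.trans[OF abs_ge_self Cauchy_Schwarz_ineq2])
  also have "\<dots> \<le> (Gc * norm x) * norm (x - x') + (Gc * norm u) * norm (u - u')"
    by (intro add_mono mult_right_mono gx gu) simp_all
  finally show ?thesis by (simp add: algebra_simps)
qed

lemma if_zero_add: "(if c then a + b else 0) = (if c then a else 0) + (if c then b else (0::'a::monoid_add))"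
  by simp

lemma if_zero_scaleR: "(if c then k *\<^sub>R a else 0) = k *\<^sub>R (if c then a else (0::'a::real_vector))"
  by simp

text \<open>The surrogate state \<open>y\<^sub>t\<close> splits into the response \<open>y_free\<close> of the closed loop to the
  disturbances and the part \<open>y_pol\<close> driven by the policies \<open>M\<^sub>t\<^sub>-\<^sub>1\<^sub>-\<^sub>H, \<dots>, M\<^sub>t\<^sub>-\<^sub>1\<close>;
  \<open>v_pol\<close> is the direct contribution of \<open>M\<^sub>t\<close> to \<open>v\<^sub>t\<close>.\<close>

locale surrogate_system =
  fixes A :: "real^'nx::finite^'nx" and B :: "real^'nu::finite^'nx" and K :: "real^'nx^'nu"
    and H :: nat and w :: "nat \<Rightarrow> 'w \<Rightarrow> real^'nx" and \<omega> :: 'w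
begin

definition y_free :: "int \<Rightarrow> real^'nx" where
  "y_free t = (\<Sum>i\<in>{0..2*H}. (if i \<le> H then mpow (A - B ** K) i else 0) *v wz w \<omega> (t - 1 - int i))"

definition y_pol :: "(int \<Rightarrow> ('nx,'nu) pol) \<Rightarrow> int \<Rightarrow> real^'nx" where
  "y_pol Ms t = (\<Sum>i\<in>{0..2*H}. (\<Sum>j\<in>{0..H}. if 1 \<le> i - j \<and> i - j \<le> H
        then mpow (A - B ** K) j ** B ** Ms (t - 1 - int j) (i - j - 1) else 0) *v wz w \<omega> (t - 1 - int i))"

definition v_pol :: "(int \<Rightarrow> ('nx,'nu) pol) \<Rightarrow> int \<Rightarrow> real^'nu" where
  "v_pol Ms t = (\<Sum>i\<in>{1..H}. (Ms t) (i - 1) *v wz w \<omega> (t - int i))"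

lemma ysur_eq: "ysur A B K H w Ms t \<omega> = y_free t + y_pol Ms t"
  unfolding ysur_def y_free_def y_pol_def Psi_def
  by (simp add: matrix_vector_mult_add_rdistrib sum.distrib algebra_simps)

lemma vsur_eq: "vsur A B K H w Ms t \<omega> = - (K *v ysur A B K H w Ms t \<omega>) + v_pol Ms t"
  unfolding vsur_def v_pol_def by simp

definition y_lin :: "('nx,'nu) pol \<Rightarrow> int \<Rightarrow> real^'nx" where "y_lin X t = y_pol (\<lambda>_. X) t"
definition v_lin :: "('nx,'nu) pol \<Rightarrow> int \<Rightarrow> real^'nu" where "v_lin X t = - (K *v y_lin X t) + v_pol (\<lambda>_. X) t"

lemma pol_linear_y_lin: "pol_linear H (\<lambda>X. y_lin X t)"
proof (rule pol_linearI)
  fix X Y :: "('nx,'nu) pol"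
  show "y_lin (\<lambda>k. X k + Y k) t = y_lin X t + y_lin Y t"
    unfolding y_lin_def y_pol_def
    by (simp only: matrix_add_ldistrib if_zero_add sum.distrib matrix_vector_mult_add_rdistrib)
next
  fix a and X :: "('nx,'nu) pol"
  show "y_lin (\<lambda>k. a *\<^sub>R X k) t = a *\<^sub>R y_lin X t"
    unfolding y_lin_def y_pol_def
    by (simp only: matrix_scalar_ac scalar_matrix_assoc[symmetric] if_zero_scaleR scaleR_sum_right[symmetric] scaleR_matrix_vector_assoc[symmetric])
next
  fix X Y :: "('nx,'nu) pol"
  assume h: "\<And>k. k < H \<Longrightarrow> X k = Y k"
  show "y_lin X t = y_lin Y t"
    unfolding y_lin_def y_pol_def
    by (intro sum.cong refl arg_cong2[where f="(*v)"]) (auto simp: h)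
qed

lemma pol_linear_v_pol: "pol_linear H (\<lambda>X. v_pol (\<lambda>_. X) t)"
proof (rule pol_linearI)
  fix X Y :: "('nx,'nu) pol"
  show "v_pol (\<lambda>_. (\<lambda>k. X k + Y k)) t = v_pol (\<lambda>_. X) t + v_pol (\<lambda>_. Y) t"
    unfolding v_pol_def by (simp add: sum.distrib matrix_vector_mult_add_rdistrib)
next
  fix a and X :: "('nx,'nu) pol"
  show "v_pol (\<lambda>_. (\<lambda>k. a *\<^sub>R X k)) t = a *\<^sub>R v_pol (\<lambda>_. X) t"
    unfolding v_pol_def by (simp add: scaleR_sum_right scaleR_matrix_vector_assoc[symmetric])
next
  fix X Y :: "('nx,'nu) pol"
  assume h: "\<And>k. k < H \<Longrightarrow> X k = Y k"
  show "v_pol (\<lambda>_. X) t = v_pol (\<lambda>_. Y) t"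
    unfolding v_pol_def by (intro sum.cong refl arg_cong2[where f="(*v)"]) (auto simp: h)
qed

lemma pol_linear_v_lin: "pol_linear H (\<lambda>X. v_lin X t)"
proof (rule pol_linearI)
  note lin = pol_linear_y_lin[of t] pol_linear_v_pol[of t]
  show "v_lin (\<lambda>k. X k + Y k) t = v_lin X t + v_lin Y t" for X Y
    by (simp add: v_lin_def pol_linear_add[OF lin(1)] pol_linear_add[OF lin(2)] matrix_vector_right_distrib)
  show "v_lin (\<lambda>k. a *\<^sub>R X k) t = a *\<^sub>R v_lin X t" for a X
    by (simp add: v_lin_def pol_linear_scaleR[OF lin(1)] pol_linear_scaleR[OF lin(2)]
        matrix_vector_mult_scaleR scaleR_right_diff_distrib)
  show "v_lin X t = v_lin Y t" if "\<And>k. k < H \<Longrightarrow> X k = Y k" for X Y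
    unfolding v_lin_def using pol_linear_cong[OF lin(1) that] pol_linear_cong[OF lin(2) that] by simp
qed

lemma ysur_const: "ysur A B K H w (\<lambda>_. X) t \<omega> = y_free t + y_lin X t"
  by (simp add: ysur_eq y_lin_def)

lemma vsur_const: "vsur A B K H w (\<lambda>_. X) t \<omega> = - (K *v y_free t) + v_lin X t"
  by (simp add: vsur_eq ysur_const v_lin_def matrix_vector_right_distrib)

lemma y_lin_perturb: "y_lin (\<lambda>k. X k + e *\<^sub>R D k) t = y_lin X t + e *\<^sub>R y_lin D t"
  using pol_linear_add[OF pol_linear_y_lin, of X "\<lambda>k. e *\<^sub>R D k"] pol_linear_scaleR[OF pol_linear_y_lin] by simp

lemma v_lin_perturb: "v_lin (\<lambda>k. X k + e *\<^sub>R D k) t = v_lin X t + e *\<^sub>R v_lin D t"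
  using pol_linear_add[OF pol_linear_v_lin, of X "\<lambda>k. e *\<^sub>R D k"] pol_linear_scaleR[OF pol_linear_v_lin] by simp

lemma fsur_eq: "fsur A B K H c w t X \<omega> = c t (y_free (int t) + y_lin X (int t)) (- (K *v y_free (int t)) + v_lin X (int t))"
  by (simp add: fsur_def Fsur_def ysur_const vsur_const)

lemma cost_gradient:
  assumes "cost_assm Gc c"
  obtains gx gu where "norm gx \<le> Gc * norm (y_free (int t) + y_lin X (int t))"
    "norm gu \<le> Gc * norm (- (K *v y_free (int t)) + v_lin X (int t))"
    "((\<lambda>(x',u'). c t x' u') has_derivative (\<lambda>(dx,du). gx \<bullet> dx + gu \<bullet> du))
        (at (y_free (int t) + y_lin X (int t), - (K *v y_free (int t)) + v_lin X (int t)))"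
  using assms unfolding cost_assm_def by blast

lemma fsur_has_real_derivative:
  assumes "((\<lambda>(x',u'). c t x' u') has_derivative (\<lambda>(dx,du). gx \<bullet> dx + gu \<bullet> du))
        (at (y_free (int t) + y_lin X (int t), - (K *v y_free (int t)) + v_lin X (int t)))"
  shows "((\<lambda>e. fsur A B K H c w t (\<lambda>k. X k + e *\<^sub>R D k) \<omega>) has_real_derivative
            (gx \<bullet> y_lin D (int t) + gu \<bullet> v_lin D (int t))) (at 0)"
proof -
  let ?Y = "y_free (int t) + y_lin X (int t)" and ?V = "- (K *v y_free (int t)) + v_lin X (int t)"
  let ?a = "y_lin D (int t)" and ?b = "v_lin D (int t)"
  have d1: "((\<lambda>e::real. (?Y + e *\<^sub>R ?a, ?V + e *\<^sub>R ?b)) has_derivative (\<lambda>e. (e *\<^sub>R ?a, e *\<^sub>R ?b))) (at 0)"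
    by (intro derivative_eq_intros) auto
  have dg0: "((\<lambda>(x',u'). c t x' u') has_derivative (\<lambda>(dx,du). gx \<bullet> dx + gu \<bullet> du))
        (at ((\<lambda>e::real. (?Y + e *\<^sub>R ?a, ?V + e *\<^sub>R ?b)) 0))" using assms by simp
  have "((\<lambda>e. (\<lambda>(x',u'). c t x' u') (?Y + e *\<^sub>R ?a, ?V + e *\<^sub>R ?b)) has_derivative
          (\<lambda>e. (\<lambda>(dx,du). gx \<bullet> dx + gu \<bullet> du) (e *\<^sub>R ?a, e *\<^sub>R ?b))) (at 0)"
    by (rule has_derivative_compose[OF d1 dg0])
  moreover have "(\<lambda>e. (\<lambda>(dx,du). gx \<bullet> dx + gu \<bullet> du) (e *\<^sub>R ?a, e *\<^sub>R ?b)) = (*) (gx \<bullet> ?a + gu \<bullet> ?b)"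
    by (simp add: fun_eq_iff algebra_simps)
  moreover have "(\<lambda>e. (\<lambda>(x',u'). c t x' u') (?Y + e *\<^sub>R ?a, ?V + e *\<^sub>R ?b)) =
      (\<lambda>e. fsur A B K H c w t (\<lambda>k. X k + e *\<^sub>R D k) \<omega>)"
    by (simp add: fun_eq_iff fsur_eq y_lin_perturb v_lin_perturb algebra_simps)
  ultimately show ?thesis by (simp only: has_field_derivative_def)
qed

lemma gradM_fsur_entry:
  assumes "((\<lambda>(x',u'). c t x' u') has_derivative (\<lambda>(dx,du). gx \<bullet> dx + gu \<bullet> du))
        (at (y_free (int t) + y_lin X (int t), - (K *v y_free (int t)) + v_lin X (int t)))" "i < H"
  shows "gradM H (\<lambda>M. fsur A B K H c w t M \<omega>) X i $ r $ s
     = gx \<bullet> y_lin (pol_unit i r s) (int t) + gu \<bullet> v_lin (pol_unit i r s) (int t)"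
proof -
  have e: "(\<lambda>e. fsur A B K H c w t (\<lambda>k. if k = i then X k + e *\<^sub>R Emat r s else X k) \<omega>)
      = (\<lambda>e. fsur A B K H c w t (\<lambda>k. X k + e *\<^sub>R pol_unit i r s k) \<omega>)"
    by (rule ext, rule arg_cong[where f="\<lambda>M. fsur A B K H c w t M \<omega>"]) (auto simp: pol_unit_def)
  show ?thesis
    using assms(2) DERIV_imp_deriv[OF fsur_has_real_derivative[where c=c and t=t and gx=gx and gu=gu and X=X and D="pol_unit i r s", OF assms(1)]]
    by (simp add: gradM_def e)
qed

lemma fsur_diff_le_gradM:
  assumes cost: "cost_assm Gc c"
    and dg: "((\<lambda>(x',u'). c t x' u') has_derivative (\<lambda>(dx,du). gx \<bullet> dx + gu \<bullet> du))
        (at (y_free (int t) + y_lin X (int t), - (K *v y_free (int t)) + v_lin X (int t)))"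
  shows "fsur A B K H c w t X \<omega> - fsur A B K H c w t M \<omega>
     \<le> (\<Sum>i<H. gradM H (\<lambda>M. fsur A B K H c w t M \<omega>) X i \<bullet> (X i - M i))"
proof -
  let ?Y = "\<lambda>X. y_free (int t) + y_lin X (int t)" and ?V = "\<lambda>X. - (K *v y_free (int t)) + v_lin X (int t)"
  let ?Lf = "\<lambda>D. gx \<bullet> y_lin D (int t) + gu \<bullet> v_lin D (int t)"
  have lf: "pol_linear H ?Lf" by (rule pol_linear_inner[OF pol_linear_y_lin pol_linear_v_lin])
  have cv: "convex_on UNIV (\<lambda>(x',u'). c t x' u')" using cost unfolding cost_assm_def by blast
  have "(\<lambda>(x',u'). c t x' u') (?Y X, ?V X) + (\<lambda>(dx,du). gx \<bullet> dx + gu \<bullet> du) ((?Y M, ?V M) - (?Y X, ?V X))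
      \<le> (\<lambda>(x',u'). c t x' u') (?Y M, ?V M)"
    by (rule convex_on_above_tangent[OF cv dg])
  then have "fsur A B K H c w t X \<omega> - fsur A B K H c w t M \<omega> \<le> gx \<bullet> (y_lin X (int t) - y_lin M (int t)) + gu \<bullet> (v_lin X (int t) - v_lin M (int t))"
    by (simp add: fsur_eq inner_diff_right)
  also have "\<dots> = ?Lf (\<lambda>k. X k - M k)"
    by (simp add: pol_linear_diff[OF pol_linear_y_lin] pol_linear_diff[OF pol_linear_v_lin])
  also have "\<dots> = (\<Sum>k<H. \<Sum>r\<in>UNIV. \<Sum>s\<in>UNIV. ((X k - M k) $ r $ s) *\<^sub>R ?Lf (pol_unit k r s))"
    by (rule pol_linear_expansion[OF lf])
  also have "\<dots> = (\<Sum>i<H. gradM H (\<lambda>M. fsur A B K H c w t M \<omega>) X i \<bullet> (X i - M i))"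
  proof (rule sum.cong[OF refl])
    fix i assume "i \<in> {..<H}"
    then have i: "i < H" by simp
    show "(\<Sum>r\<in>UNIV. \<Sum>s\<in>UNIV. ((X i - M i) $ r $ s) *\<^sub>R ?Lf (pol_unit i r s))
        = gradM H (\<lambda>M. fsur A B K H c w t M \<omega>) X i \<bullet> (X i - M i)"
      unfolding inner_vec_def inner_real_def gradM_fsur_entry[where c=c and t=t and gx=gx and gu=gu and X=X, OF dg i] by (simp add: mult.commute)
  qed
  finally show ?thesis .
qed

end

section \<open>Frobenius projection onto the constraint set\<close>

definition frob2 :: "nat \<Rightarrow> ('nx::finite,'nu::finite) pol \<Rightarrow> real" where
  "frob2 H X = (\<Sum>i<H. (norm (X i))^2)"

definition frob_inner :: "nat \<Rightarrow> ('nx::finite,'nu::finite) pol \<Rightarrow> ('nx,'nu) pol \<Rightarrow> real" where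
  "frob_inner H X Y = (\<Sum>i<H. X i \<bullet> Y i)"

lemma frob2_nonneg: "0 \<le> frob2 H X"
  unfolding frob2_def by (simp add: sum_nonneg)

lemma frob_eq_sqrt_frob2: "frob H X = sqrt (frob2 H X)"
  unfolding frob_def frob2_def power2_norm_eq_inner by (simp add: inner_vec_def power2_eq_square)

lemma frob_eq_L2_set: "frob H X = L2_set (\<lambda>i. norm (X i)) {..<H}"
  by (simp add: frob_eq_sqrt_frob2 frob2_def L2_set_def)

lemma frob_nonneg: "0 \<le> frob H X"
  by (simp add: frob_eq_sqrt_frob2 frob2_nonneg)

lemma frob_diff_triangle:
  "frob H (\<lambda>i. X i - Z i) \<le> frob H (\<lambda>i. X i - Y i) + frob H (\<lambda>i. Y i - Z i)"
proof -
  have "frob H (\<lambda>i. X i - Z i) \<le> L2_set (\<lambda>i. norm (X i - Y i) + norm (Y i - Z i)) {..<H}"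
    unfolding frob_eq_L2_set by (rule L2_set_mono) (auto intro: norm_diff_triangle_le)
  also have "\<dots> \<le> frob H (\<lambda>i. X i - Y i) + frob H (\<lambda>i. Y i - Z i)"
    unfolding frob_eq_L2_set by (rule L2_set_triangle_ineq)
  finally show ?thesis .
qed

lemma frob_diff_commute: "frob H (\<lambda>i. X i - Y i) = frob H (\<lambda>i. Y i - X i)"
  unfolding frob_eq_L2_set by (simp add: norm_minus_commute)

lemma norm_le_frob: "k < H \<Longrightarrow> norm (X k) \<le> frob H X"
  unfolding frob_eq_L2_set by (rule member_le_L2_set) auto

lemma frob2_add: "frob2 H (\<lambda>i. a i + b i) = frob2 H a + 2 * frob_inner H a b + frob2 H b"
  unfolding frob2_def frob_inner_def
  by (simp add: power2_norm_eq_inner inner_add_left inner_add_right inner_commute sum.distrib sum_distrib_left)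

lemma frob2_scaleR: "frob2 H (\<lambda>i. s *\<^sub>R a i) = s^2 * frob2 H a"
  unfolding frob2_def by (simp add: sum_distrib_left power_mult_distrib)

lemma continuous_on_opnorm: "continuous_on UNIV (opnorm :: real^'n::finite^'m::finite \<Rightarrow> real)"
proof -
  have "\<bar>opnorm x' - opnorm x\<bar> \<le> norm (x' - x)" for x x' :: "real^'n^'m"
    using opnorm_add_le[of x "x' - x"] opnorm_add_le[of x' "x - x'"]
      opnorm_le_norm[of "x' - x"] opnorm_le_norm[of "x - x'"]
    by (simp add: norm_minus_commute)
  then show ?thesis
    by (intro lipschitz_on_continuous_on[of 1] lipschitz_onI) (auto simp: dist_norm dist_real_def)
qed

lemma compact_opnorm_le: "compact {P :: real^'n::finite^'m::finite. opnorm P \<le> \<rho>}"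
proof -
  have "closed {P :: real^'n^'m. opnorm P \<le> \<rho>}"
    using closed_Collect_le[OF continuous_on_opnorm continuous_on_const, of \<rho>] by simp
  moreover have "bounded {P :: real^'n^'m. opnorm P \<le> \<rho>}"
    unfolding bounded_iff
  proof (intro exI ballI)
    fix P :: "real^'n^'m" assume "P \<in> {P. opnorm P \<le> \<rho>}"
    then have "sqrt (real CARD('n)) * opnorm P \<le> sqrt (real CARD('n)) * \<rho>"
      by (intro mult_left_mono) auto
    then show "norm P \<le> sqrt (real CARD('n)) * \<rho>" using norm_le_sqrt_card_opnorm[of P] by linarith
  qed
  ultimately show ?thesis by (simp add: compact_eq_bounded_closed)
qed

definition Mrad :: "real \<Rightarrow> real \<Rightarrow> real \<Rightarrow> nat \<Rightarrow> real" where
  "Mrad kB \<kappa> \<gamma> i = 2 * kB * \<kappa>^3 * (1 - \<gamma>)^i"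

lemma Mset_iff:
  "M \<in> Mset H kB \<kappa> \<gamma> \<longleftrightarrow> (\<forall>i<H. opnorm (M i) \<le> Mrad kB \<kappa> \<gamma> i) \<and> (\<forall>i\<ge>H. M i = 0)"
  by (simp add: Mset_def Mrad_def)

lemma Mset_segment:
  assumes "P \<in> Mset H kB \<kappa> \<gamma>" "Q \<in> Mset H kB \<kappa> \<gamma>" "0 \<le> s" "s \<le> 1"
  shows "(\<lambda>i. P i + s *\<^sub>R (Q i - P i)) \<in> Mset H kB \<kappa> \<gamma>"
  unfolding Mset_iff
proof (intro conjI allI impI)
  fix i assume i: "i < H"
  have "P i + s *\<^sub>R (Q i - P i) = (1 - s) *\<^sub>R P i + s *\<^sub>R Q i" by (simp add: algebra_simps)
  then have "opnorm (P i + s *\<^sub>R (Q i - P i)) \<le> (1 - s) * opnorm (P i) + s * opnorm (Q i)"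
    using opnorm_add_le[of "(1 - s) *\<^sub>R P i" "s *\<^sub>R Q i"]
      opnorm_scaleR_le[of "1 - s" "P i"] opnorm_scaleR_le[of s "Q i"] assms(3,4) by simp
  also have "\<dots> \<le> (1 - s) * Mrad kB \<kappa> \<gamma> i + s * Mrad kB \<kappa> \<gamma> i"
    using assms i unfolding Mset_iff by (intro add_mono mult_left_mono) auto
  finally show "opnorm (P i + s *\<^sub>R (Q i - P i)) \<le> Mrad kB \<kappa> \<gamma> i" by (simp add: algebra_simps)
qed (use assms in \<open>simp add: Mset_iff\<close>)

text \<open>The constraint set is a product of operator-norm balls, so the Frobenius projection can be
  taken coordinatewise.\<close>

lemma proj_exists:
  fixes X Q' :: "('nx::finite,'nu::finite) pol"
  assumes "Q' \<in> Mset H kB \<kappa> \<gamma>"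
  shows "\<exists>P. P \<in> Mset H kB \<kappa> \<gamma> \<and> (\<forall>Q\<in>Mset H kB \<kappa> \<gamma>. frob H (\<lambda>i. P i - X i) \<le> frob H (\<lambda>i. Q i - X i))"
proof -
  let ?ball = "\<lambda>i. {P::real^'nx^'nu. opnorm P \<le> Mrad kB \<kappa> \<gamma> i}"
  have "\<exists>p. i < H \<longrightarrow> p \<in> ?ball i \<and> (\<forall>q\<in>?ball i. norm (p - X i) \<le> norm (q - X i))" for i
  proof (cases "i < H")
    case True
    then have "Q' i \<in> ?ball i" using assms by (simp add: Mset_iff)
    then have "\<exists>p\<in>?ball i. \<forall>q\<in>?ball i. norm (p - X i) \<le> norm (q - X i)"
      by (intro continuous_attains_inf compact_opnorm_le continuous_intros) auto
    then show ?thesis by blast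
  qed simp
  then obtain p where p: "\<And>i. i < H \<Longrightarrow> p i \<in> ?ball i \<and> (\<forall>q\<in>?ball i. norm (p i - X i) \<le> norm (q - X i))"
    by metis
  define P where "P = (\<lambda>i. if i < H then p i else 0)"
  have "P \<in> Mset H kB \<kappa> \<gamma>" unfolding Mset_iff P_def using p by auto
  moreover have "frob H (\<lambda>i. P i - X i) \<le> frob H (\<lambda>i. Q i - X i)" if "Q \<in> Mset H kB \<kappa> \<gamma>" for Q
    unfolding frob_eq_L2_set
    by (rule L2_set_mono) (use that p in \<open>auto simp: P_def Mset_iff\<close>)
  ultimately show ?thesis by blast
qed

lemma proj_mem:
  fixes X Q' :: "('nx::finite,'nu::finite) pol"
  assumes "Q' \<in> Mset H kB \<kappa> \<gamma>"
  shows "proj H (Mset H kB \<kappa> \<gamma>) X \<in> Mset H kB \<kappa> \<gamma>"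
  using someI_ex[OF proj_exists[OF assms]] unfolding proj_def by blast

lemma proj_min:
  fixes X Q' :: "('nx::finite,'nu::finite) pol"
  assumes "Q' \<in> Mset H kB \<kappa> \<gamma>" "Q \<in> Mset H kB \<kappa> \<gamma>"
  shows "frob H (\<lambda>i. proj H (Mset H kB \<kappa> \<gamma>) X i - X i) \<le> frob H (\<lambda>i. Q i - X i)"
  using someI_ex[OF proj_exists[OF assms(1)]] assms(2) unfolding proj_def by blast

lemma nonneg_if_nonneg_perturbations:
  fixes a b :: real
  assumes "\<And>s. 0 < s \<Longrightarrow> s \<le> 1 \<Longrightarrow> 0 \<le> a + s * b"
  shows "0 \<le> a"
proof (rule ccontr)
  assume a: "\<not> 0 \<le> a"
  define s where "s = min 1 (- a / (2 * \<bar>b\<bar> + 1))"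
  have "0 < - a / (2 * \<bar>b\<bar> + 1)" by (rule divide_pos_pos) (use a in auto)
  then have s: "0 < s" "s \<le> 1" by (auto simp: s_def)
  have "s * \<bar>b\<bar> \<le> - a / 2"
  proof -
    have "s \<le> - a / (2 * \<bar>b\<bar> + 1)" by (simp add: s_def)
    then have "s * (2 * \<bar>b\<bar> + 1) \<le> (- a / (2 * \<bar>b\<bar> + 1)) * (2 * \<bar>b\<bar> + 1)"
      by (rule mult_right_mono) simp
    then have "s * (2 * \<bar>b\<bar> + 1) \<le> - a" by (simp add: add_pos_nonneg)
    then show ?thesis using s by (simp add: algebra_simps)
  qed
  moreover have "s * b \<le> s * \<bar>b\<bar>" using s by (intro mult_left_mono) auto
  ultimately have "a + s * b < 0" using a by linarith
  then show False using assms[OF s] by simp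
qed

lemma proj_nonexpansive:
  assumes Q: "Q \<in> Mset H kB \<kappa> \<gamma>"
  shows "frob2 H (\<lambda>i. proj H (Mset H kB \<kappa> \<gamma>) X i - Q i) \<le> frob2 H (\<lambda>i. X i - Q i)"
proof -
  let ?P = "proj H (Mset H kB \<kappa> \<gamma>) X"
  let ?a = "\<lambda>i. ?P i - X i" and ?b = "\<lambda>i. Q i - ?P i"
  have "0 \<le> 2 * frob_inner H ?a ?b + s * frob2 H ?b" if s: "0 < s" "s \<le> 1" for s
  proof -
    have "(\<lambda>i. ?P i + s *\<^sub>R ?b i) \<in> Mset H kB \<kappa> \<gamma>"
      using Mset_segment[OF proj_mem[OF Q] Q] s by auto
    from proj_min[OF Q this] have "frob H ?a \<le> frob H (\<lambda>i. ?a i + s *\<^sub>R ?b i)"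
      by (simp add: algebra_simps)
    then have "frob2 H ?a \<le> frob2 H ?a + 2 * frob_inner H ?a (\<lambda>i. s *\<^sub>R ?b i) + s^2 * frob2 H ?b"
      by (simp add: frob_eq_sqrt_frob2 frob2_add frob2_scaleR)
    then have "0 \<le> s * (2 * frob_inner H ?a ?b + s * frob2 H ?b)"
      by (simp add: frob_inner_def sum_distrib_left algebra_simps power2_eq_square)
    then show ?thesis using s by (simp add: zero_le_mult_iff)
  qed
  then have "0 \<le> 2 * frob_inner H ?a ?b" by (rule nonneg_if_nonneg_perturbations)
  also have "frob_inner H ?a ?b = frob_inner H (\<lambda>i. X i - ?P i) (\<lambda>i. ?P i - Q i)"
    unfolding frob_inner_def by (intro sum.cong refl) (simp add: inner_diff_left inner_diff_right algebra_simps)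
  finally have "frob2 H (\<lambda>i. ?P i - Q i)
      \<le> frob2 H (\<lambda>i. X i - ?P i) + 2 * frob_inner H (\<lambda>i. X i - ?P i) (\<lambda>i. ?P i - Q i) + frob2 H (\<lambda>i. ?P i - Q i)"
    using frob2_nonneg[of H "\<lambda>i. X i - ?P i"] by linarith
  also have "\<dots> = frob2 H (\<lambda>i. (X i - ?P i) + (?P i - Q i))" by (rule frob2_add[symmetric])
  finally show ?thesis by simp
qed

section \<open>Bounds in terms of the disturbances\<close>

lemma sum_window_reindex:
  fixes H j :: nat
  assumes "j \<le> H"
  shows "(\<Sum>i\<in>{0..2*H}. if 1 \<le> i - j \<and> i - j \<le> H then g (i - j - 1) else (0::real)) = (\<Sum>k<H. g k)"
proof -
  let ?I = "(\<lambda>k. k + j + 1) ` {..<H}"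
  have sub: "?I \<subseteq> {0..2*H}" using assms by auto
  have c: "(1 \<le> i - j \<and> i - j \<le> H) \<longleftrightarrow> i \<in> ?I" for i
  proof
    assume "1 \<le> i - j \<and> i - j \<le> H"
    then have "i = (i - j - 1) + j + 1" "i - j - 1 < H" by auto
    then show "i \<in> ?I" by blast
  qed auto
  have "(\<Sum>i\<in>{0..2*H}. if 1 \<le> i - j \<and> i - j \<le> H then g (i - j - 1) else 0)
      = (\<Sum>i\<in>{0..2*H}. if i \<in> ?I then g (i - j - 1) else 0)"
    by (intro sum.cong refl if_cong[OF c refl refl])
  also have "\<dots> = (\<Sum>i\<in>{0..2*H} \<inter> ?I. g (i - j - 1))" by (simp only: sum.inter_restrict[OF finite_atLeastAtMost])
  also have "{0..2*H} \<inter> ?I = ?I" using sub by blast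
  also have "(\<Sum>i\<in>?I. g (i - j - 1)) = (\<Sum>k<H. g k)"
    by (subst sum.reindex) (auto simp: inj_on_def)
  finally show ?thesis .
qed

lemma sum_window_swap:
  "(\<Sum>i\<in>{0..2*H}. \<Sum>j\<in>{0..H}. if 1 \<le> i - j \<and> i - j \<le> H then f j (i - j - 1) else (0::real))
    = (\<Sum>j\<in>{0..H}. \<Sum>k<H. f j k)" for H :: nat
  by (subst sum.swap) (intro sum.cong refl sum_window_reindex, auto)

lemma geometric_sum_le: "0 < (\<gamma>::real) \<Longrightarrow> \<gamma> \<le> 1 \<Longrightarrow> (\<Sum>k<n. (1 - \<gamma>)^k) \<le> 1 / \<gamma>"
proof -
  assume g: "0 < \<gamma>" "\<gamma> \<le> 1"
  have "(\<Sum>k<n. (1 - \<gamma>)^k) = (1 - (1 - \<gamma>)^n) / \<gamma>" using g by (subst sum_gp_strict) auto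
  also have "\<dots> \<le> 1 / \<gamma>" using g by (intro divide_right_mono) auto
  finally show ?thesis .
qed

lemma norm_matrix_power2: "(norm (X::real^'n::finite^'m::finite))^2 = (\<Sum>r\<in>UNIV. \<Sum>s\<in>UNIV. (X $ r $ s)^2)"
  unfolding power2_norm_eq_inner by (simp add: inner_vec_def power2_eq_square)

lemma matrix_diff_ldistrib: "(A::real^'n::finite^'m::finite) ** ((B::real^'p::finite^'n) - C) = A ** B - A ** C"
  by (simp add: matrix_matrix_mult_def vec_eq_iff sum_subtractf algebra_simps)

lemma if_zero_diff: "(if c then a - b else 0) = (if c then a else 0) - (if c then b else (0::'a::group_add))"
  by simp

lemma (in surrogate_system) y_pol_diff: "y_pol Ms t - y_pol Ms' t = y_pol (\<lambda>s k. Ms s k - Ms' s k) t"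
  unfolding y_pol_def
  by (simp only: matrix_diff_ldistrib if_zero_diff sum_subtractf matrix_vector_mult_diff_rdistrib)

locale stable_system =
  fixes A :: "real^'nx::finite^'nx" and B :: "real^'nu::finite^'nx" and K :: "real^'nx^'nu"
    and H :: nat and kB \<kappa> \<gamma> :: real
  assumes gamma_pos: "0 < \<gamma>" and gamma_less_1: "\<gamma> < 1"
    and kB_ge_1: "1 \<le> kB" and opnorm_B_le: "opnorm B \<le> kB"
    and kappa_ge_1: "1 \<le> \<kappa>" and opnorm_K_le: "opnorm K \<le> \<kappa>"
    and opnorm_AK_pow_le: "\<And>j. opnorm (mpow (A - B ** K) j) \<le> \<kappa>^2 * (1-\<gamma>)^j"
begin

abbreviation "S \<equiv> Mset H kB \<kappa> \<gamma>"

lemma kB_nonneg: "0 \<le> kB" and kappa_nonneg: "0 \<le> \<kappa>"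
  using kB_ge_1 kappa_ge_1 by simp_all

lemma AK_pow_bound_nonneg: "0 \<le> \<kappa>^2 * (1 - \<gamma>)^i"
  using gamma_less_1 by simp

lemma geometric_sum_bound: "(\<Sum>k<n. (1 - \<gamma>)^k) \<le> 1 / \<gamma>"
  using geometric_sum_le gamma_pos gamma_less_1 by simp

lemma opnorm_AK_pow_B_le: "opnorm (mpow (A - B ** K) j ** B) \<le> \<kappa>^2 * (1-\<gamma>)^j * kB"
  using opnorm_matrix_mult_le[of "mpow (A - B ** K) j" B] opnorm_AK_pow_le[of j] opnorm_B_le
  by (meson mult_mono opnorm_nonneg order.trans AK_pow_bound_nonneg)

lemma norm_K_mv_le: "norm (K *v v) \<le> \<kappa> * norm v"
  using norm_mv_le_opnorm[of K v] opnorm_K_le by (meson mult_right_mono norm_ge_zero order.trans)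

lemma Mset_opnorm_le: "M \<in> S \<Longrightarrow> k < H \<Longrightarrow> opnorm (M k) \<le> Mrad kB \<kappa> \<gamma> k"
  by (simp add: Mset_iff)

lemma opnorm_y_pol_coeff_le:
  assumes rho: "\<And>j k. j \<le> H \<Longrightarrow> k < H \<Longrightarrow> opnorm (Ms (t - 1 - int j) k) \<le> \<rho> k"
  shows "opnorm (\<Sum>j\<in>{0..H}. if 1 \<le> i - j \<and> i - j \<le> H
            then mpow (A - B ** K) j ** B ** Ms (t - 1 - int j) (i - j - 1) else 0)
    \<le> (\<Sum>j\<in>{0..H}. if 1 \<le> i - j \<and> i - j \<le> H then \<kappa>^2 * (1-\<gamma>)^j * kB * \<rho> (i - j - 1) else 0)"
proof -
  have "opnorm (mpow (A - B ** K) j ** B ** Ms (t - 1 - int j) (i - j - 1)) \<le> \<kappa>^2 * (1-\<gamma>)^j * kB * \<rho> (i - j - 1)"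
    if "j \<le> H" "1 \<le> i - j" "i - j \<le> H" for j
  proof -
    have "opnorm (mpow (A - B ** K) j ** B ** Ms (t - 1 - int j) (i - j - 1))
        \<le> opnorm (mpow (A - B ** K) j ** B) * opnorm (Ms (t - 1 - int j) (i - j - 1))"
      by (rule opnorm_matrix_mult_le)
    also have "\<dots> \<le> (\<kappa>^2 * (1-\<gamma>)^j * kB) * \<rho> (i - j - 1)"
      using that by (intro mult_mono opnorm_AK_pow_B_le rho opnorm_nonneg) (auto simp: AK_pow_bound_nonneg kB_nonneg)
    finally show ?thesis .
  qed
  then show ?thesis
    by (intro order.trans[OF opnorm_sum_le] sum_mono) auto
qed

lemma sum_Mrad_le: "(\<Sum>k<H. Mrad kB \<kappa> \<gamma> k) \<le> 2 * kB * \<kappa>^3 / \<gamma>"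
proof -
  have "(\<Sum>k<H. Mrad kB \<kappa> \<gamma> k) = 2 * kB * \<kappa>^3 * (\<Sum>k<H. (1-\<gamma>)^k)"
    by (simp add: Mrad_def sum_distrib_left)
  also have "\<dots> \<le> 2 * kB * \<kappa>^3 * (1/\<gamma>)" by (intro mult_left_mono geometric_sum_bound) (auto simp: kB_nonneg kappa_nonneg)
  finally show ?thesis by simp
qed

text \<open>If the disturbances entering step \<open>t\<close> are bounded by \<open>N\<close>, then \<open>\<parallel>y\<^sub>t\<parallel> \<le> cy N\<close> and
  \<open>\<parallel>v\<^sub>t\<parallel> \<le> cv N\<close> for policies in \<open>S\<close>, and a single unit entry of the policy moves \<open>y\<^sub>t\<close>
  by at most \<open>cresp N\<close>.\<close>

definition "cresp = \<kappa>^2 * kB / \<gamma>"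
definition "cy = \<kappa>^2 / \<gamma> + cresp * (2 * kB * \<kappa>^3 / \<gamma>)"
definition "cv = \<kappa> * cy + 2 * kB * \<kappa>^3 / \<gamma>"
definition "cgrad_entry Gc = Gc * (cy * cresp + cv * (\<kappa> * cresp + 1))"

lemma cresp_nonneg: "0 \<le> cresp" unfolding cresp_def using kB_nonneg gamma_pos by simp
lemma cy_nonneg: "0 \<le> cy" unfolding cy_def using cresp_nonneg kB_nonneg kappa_nonneg gamma_pos by simp
lemma cv_nonneg: "0 \<le> cv" unfolding cv_def using cy_nonneg kB_nonneg kappa_nonneg gamma_pos by simp

end

locale noise_window = surrogate_system A B K H w \<omega> + stable_system A B K H kB \<kappa> \<gamma>
  for A :: "real^'nx::finite^'nx" and B :: "real^'nu::finite^'nx" and K H w \<omega> kB \<kappa> \<gamma>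
begin

definition noise_le :: "int \<Rightarrow> real \<Rightarrow> bool" where
  "noise_le t N \<longleftrightarrow> (\<forall>k\<in>{1..2*H+1}. norm (wz w \<omega> (t - int k)) \<le> N)"

lemma noise_leD: "noise_le t N \<Longrightarrow> i \<le> 2*H \<Longrightarrow> norm (wz w \<omega> (t - 1 - int i)) \<le> N"
  unfolding noise_le_def by (drule bspec[of _ _ "i+1"]) (auto simp: algebra_simps)

lemma noise_leD2: "noise_le t N \<Longrightarrow> 1 \<le> i \<Longrightarrow> i \<le> H \<Longrightarrow> norm (wz w \<omega> (t - int i)) \<le> N"
  unfolding noise_le_def by (drule bspec[of _ _ "i"]) auto

lemma noise_le_nonneg: "noise_le t N \<Longrightarrow> 0 \<le> N"
  using noise_leD[of t N 0] by (meson norm_ge_zero order.trans zero_le)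

lemma norm_y_free_le: "noise_le t N \<Longrightarrow> norm (y_free t) \<le> \<kappa>^2 / \<gamma> * N"
proof -
  assume noise_le: "noise_le t N"
  have N0: "0 \<le> N" using noise_le_nonneg[OF noise_le] .
  have "norm (y_free t) \<le> (\<Sum>i\<in>{0..2*H}. opnorm (if i \<le> H then mpow (A - B ** K) i else 0) * norm (wz w \<omega> (t - 1 - int i)))"
    unfolding y_free_def by (rule norm_sum_mv_le) simp
  also have "\<dots> \<le> (\<Sum>i\<in>{0..2*H}. \<kappa>^2 * (1-\<gamma>)^i * N)"
  proof (rule sum_mono)
    fix i assume "i \<in> {0..2*H}"
    then have w: "norm (wz w \<omega> (t - 1 - int i)) \<le> N" using noise_leD[OF noise_le] by simp
    have o: "opnorm (if i \<le> H then mpow (A - B ** K) i else 0) \<le> \<kappa>^2 * (1-\<gamma>)^i"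
    proof (cases "i \<le> H")
      case True then show ?thesis using opnorm_AK_pow_le[of i] by simp
    next
      case False
      have "opnorm (0::real^'nx^'nx) = 0" by (rule opnorm_zero)
      then show ?thesis using False AK_pow_bound_nonneg[of i] by simp
    qed
    show "opnorm (if i \<le> H then mpow (A - B ** K) i else 0) * norm (wz w \<omega> (t - 1 - int i)) \<le> \<kappa>^2 * (1-\<gamma>)^i * N"
      by (intro mult_mono o w AK_pow_bound_nonneg) simp
  qed
  also have "\<dots> = \<kappa>^2 * N * (\<Sum>i<Suc (2*H). (1-\<gamma>)^i)"
    by (simp add: sum_distrib_left atLeast0AtMost lessThan_Suc_atMost[symmetric] algebra_simps)
  also have "\<dots> \<le> \<kappa>^2 * N * (1/\<gamma>)" by (intro mult_left_mono geometric_sum_bound) (auto simp: N0)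
  finally show ?thesis by simp
qed

lemma norm_y_pol_le:
  assumes noise_le: "noise_le t N" and rho: "\<And>j k. j \<le> H \<Longrightarrow> k < H \<Longrightarrow> opnorm (Ms (t - 1 - int j) k) \<le> \<rho> k"
  shows "norm (y_pol Ms t) \<le> \<kappa>^2 * kB / \<gamma> * (\<Sum>k<H. \<rho> k) * N"
proof -
  have N0: "0 \<le> N" using noise_le_nonneg[OF noise_le] .
  have rho0: "0 \<le> \<rho> k" if "k < H" for k using rho[of 0 k] that opnorm_nonneg by (meson order.trans zero_le)
  let ?P = "\<lambda>i. \<Sum>j\<in>{0..H}. if 1 \<le> i - j \<and> i - j \<le> H
        then mpow (A - B ** K) j ** B ** Ms (t - 1 - int j) (i - j - 1) else 0"
  let ?f = "\<lambda>j k. \<kappa>^2 * (1-\<gamma>)^j * kB * \<rho> k"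
  have "norm (y_pol Ms t) \<le> (\<Sum>i\<in>{0..2*H}. opnorm (?P i) * norm (wz w \<omega> (t - 1 - int i)))"
    unfolding y_pol_def by (rule norm_sum_mv_le) simp
  also have "\<dots> \<le> (\<Sum>i\<in>{0..2*H}. (\<Sum>j\<in>{0..H}. if 1 \<le> i - j \<and> i - j \<le> H then ?f j (i - j - 1) else 0) * N)"
    using noise_leD[OF noise_le] rho0
    by (intro sum_mono mult_mono opnorm_y_pol_coeff_le rho)
      (auto intro!: sum_nonneg mult_nonneg_nonneg AK_pow_bound_nonneg kB_nonneg)
  also have "\<dots> = (\<Sum>i\<in>{0..2*H}. \<Sum>j\<in>{0..H}. if 1 \<le> i - j \<and> i - j \<le> H then ?f j (i - j - 1) else 0) * N"
    by (simp add: sum_distrib_right)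
  also have "(\<Sum>i\<in>{0..2*H}. \<Sum>j\<in>{0..H}. if 1 \<le> i - j \<and> i - j \<le> H then ?f j (i - j - 1) else 0)
      = (\<Sum>j\<in>{0..H}. \<Sum>k<H. ?f j k)" by (rule sum_window_swap)
  also have "(\<Sum>j\<in>{0..H}. \<Sum>k<H. ?f j k) = \<kappa>^2 * kB * (\<Sum>j<Suc H. (1-\<gamma>)^j) * (\<Sum>k<H. \<rho> k)"
    by (simp add: sum_distrib_left sum_distrib_right atLeast0AtMost lessThan_Suc_atMost[symmetric] algebra_simps)
  also have "\<dots> \<le> \<kappa>^2 * kB * (1 / \<gamma>) * (\<Sum>k<H. \<rho> k)"
    by (intro mult_right_mono mult_left_mono geometric_sum_bound sum_nonneg rho0) (auto simp: kB_nonneg)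
  finally show ?thesis using N0 by (simp add: mult_right_mono)
qed

lemma norm_v_pol_le:
  assumes noise_le: "noise_le t N" and rho: "\<And>k. k < H \<Longrightarrow> opnorm (Ms t k) \<le> \<rho> k"
  shows "norm (v_pol Ms t) \<le> (\<Sum>k<H. \<rho> k) * N"
proof -
  have "norm (v_pol Ms t) \<le> (\<Sum>i\<in>{1..H}. opnorm (Ms t (i - 1)) * norm (wz w \<omega> (t - int i)))"
    unfolding v_pol_def by (rule norm_sum_mv_le) simp
  also have "\<dots> \<le> (\<Sum>i\<in>{1..H}. \<rho> (i - 1) * N)"
  proof (rule sum_mono)
    fix i assume i: "i \<in> {1..H}"
    have r: "opnorm (Ms t (i - 1)) \<le> \<rho> (i - 1)" using i rho by auto
    have r0: "0 \<le> \<rho> (i - 1)" using order.trans[OF opnorm_nonneg r] .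
    show "opnorm (Ms t (i - 1)) * norm (wz w \<omega> (t - int i)) \<le> \<rho> (i - 1) * N"
      using i by (intro mult_mono r noise_leD2[OF noise_le] r0) auto
  qed
  also have "\<dots> = (\<Sum>k<H. \<rho> k) * N"
    by (simp add: sum.atLeast1_atMost_eq sum_distrib_right)
  finally show ?thesis .
qed

lemma norm_y_pol_Mset_le:
  assumes noise_le: "noise_le t N" and hist: "\<And>j. j \<le> H \<Longrightarrow> Ms (t - 1 - int j) \<in> S"
  shows "norm (y_pol Ms t) \<le> cresp * (2 * kB * \<kappa>^3 / \<gamma>) * N"
proof -
  have "norm (y_pol Ms t) \<le> \<kappa>^2 * kB / \<gamma> * (\<Sum>k<H. Mrad kB \<kappa> \<gamma> k) * N"
    by (rule norm_y_pol_le[OF noise_le]) (use hist Mset_opnorm_le in blast)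
  also have "\<dots> \<le> cresp * (2 * kB * \<kappa>^3 / \<gamma>) * N"
    unfolding cresp_def using noise_le_nonneg[OF noise_le] sum_Mrad_le kB_nonneg gamma_pos
    by (intro mult_right_mono mult_left_mono) auto
  finally show ?thesis .
qed

lemma norm_ysur_le:
  assumes noise_le: "noise_le t N" and hist: "\<And>j. j \<le> H \<Longrightarrow> Ms (t - 1 - int j) \<in> S"
  shows "norm (ysur A B K H w Ms t \<omega>) \<le> cy * N"
proof -
  have "norm (ysur A B K H w Ms t \<omega>) \<le> norm (y_free t) + norm (y_pol Ms t)"
    unfolding ysur_eq by (rule norm_triangle_ineq)
  also have "\<dots> \<le> \<kappa>^2 / \<gamma> * N + cresp * (2 * kB * \<kappa>^3 / \<gamma>) * N"
    by (intro add_mono norm_y_free_le[OF noise_le] norm_y_pol_Mset_le[where Ms=Ms, OF noise_le hist])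
  finally show ?thesis by (simp add: cy_def algebra_simps)
qed

lemma norm_vsur_le:
  assumes noise_le: "noise_le t N" and hist: "\<And>j. j \<le> H \<Longrightarrow> Ms (t - 1 - int j) \<in> S" and cur: "Ms t \<in> S"
  shows "norm (vsur A B K H w Ms t \<omega>) \<le> cv * N"
proof -
  have "norm (vsur A B K H w Ms t \<omega>) \<le> norm (K *v ysur A B K H w Ms t \<omega>) + norm (v_pol Ms t)"
    unfolding vsur_eq using norm_triangle_ineq[of "- (K *v ysur A B K H w Ms t \<omega>)" "v_pol Ms t"] by simp
  also have "\<dots> \<le> \<kappa> * (cy * N) + (\<Sum>k<H. Mrad kB \<kappa> \<gamma> k) * N"
    using kappa_nonneg by (intro add_mono order.trans[OF norm_K_mv_le] mult_left_mono norm_ysur_le[where Ms=Ms, OF noise_le hist]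
        norm_v_pol_le[OF noise_le] Mset_opnorm_le[OF cur]) auto
  also have "\<dots> \<le> \<kappa> * (cy * N) + (2 * kB * \<kappa>^3 / \<gamma>) * N"
    using noise_le_nonneg[OF noise_le] sum_Mrad_le cy_nonneg by (intro add_mono mult_right_mono) auto
  finally show ?thesis by (simp add: cv_def algebra_simps)
qed

lemma norm_y_lin_unit_le:
  assumes noise_le: "noise_le t N" and i: "i < H"
  shows "norm (y_lin (pol_unit i r s) t) \<le> cresp * N"
proof -
  have "norm (y_lin (pol_unit i r s) t) \<le> \<kappa>^2 * kB / \<gamma> * (\<Sum>k<H. if k = i then 1 else 0) * N"
    unfolding y_lin_def by (rule norm_y_pol_le[OF noise_le opnorm_pol_unit_le])
  then show ?thesis using i by (simp add: cresp_def)
qed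

lemma norm_v_lin_unit_le:
  assumes noise_le: "noise_le t N" and i: "i < H"
  shows "norm (v_lin (pol_unit i r s) t) \<le> (\<kappa> * cresp + 1) * N"
proof -
  have "norm (v_lin (pol_unit i r s) t) \<le> norm (K *v y_lin (pol_unit i r s) t) + norm (v_pol (\<lambda>_. pol_unit i r s) t)"
    unfolding v_lin_def using norm_triangle_ineq[of "- (K *v y_lin (pol_unit i r s) t)"] by simp
  also have "\<dots> \<le> \<kappa> * (cresp * N) + (\<Sum>k<H. if k = i then 1 else 0) * N"
    using kappa_nonneg by (intro add_mono order.trans[OF norm_K_mv_le] mult_left_mono norm_y_lin_unit_le[OF noise_le i]
        norm_v_pol_le[OF noise_le] opnorm_pol_unit_le) auto
  finally show ?thesis using i by (simp add: algebra_simps)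
qed

lemma norm_y_pol_diff_le:
  assumes noise_le: "noise_le t N" and d: "\<And>j k. j \<le> H \<Longrightarrow> k < H \<Longrightarrow> opnorm (Ms (t - 1 - int j) k - Ms' (t - 1 - int j) k) \<le> \<delta>"
  shows "norm (y_pol Ms t - y_pol Ms' t) \<le> cresp * H * \<delta> * N"
proof -
  have "norm (y_pol Ms t - y_pol Ms' t) \<le> \<kappa>^2 * kB / \<gamma> * (\<Sum>k<H. \<delta>) * N"
    unfolding y_pol_diff by (rule norm_y_pol_le[OF noise_le]) (rule d)
  then show ?thesis by (simp add: cresp_def)
qed

lemma abs_gradM_fsur_le:
  assumes cost: "cost_assm Gc c" and X: "X \<in> S" and noise_le: "noise_le (int t) N" and i: "i < H"
  shows "\<bar>gradM H (\<lambda>M. fsur A B K H c w t M \<omega>) X i $ r $ s\<bar> \<le> cgrad_entry Gc * N^2"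
proof -
  have Gc0: "0 \<le> Gc" using cost_assm_Gc_ge_1[OF cost] by simp
  have N0: "0 \<le> N" using noise_le_nonneg[OF noise_le] .
  obtain gx gu where gx: "norm gx \<le> Gc * norm (y_free (int t) + y_lin X (int t))"
    and gu: "norm gu \<le> Gc * norm (- (K *v y_free (int t)) + v_lin X (int t))"
    and dg: "((\<lambda>(x',u'). c t x' u') has_derivative (\<lambda>(dx,du). gx \<bullet> dx + gu \<bullet> du))
        (at (y_free (int t) + y_lin X (int t), - (K *v y_free (int t)) + v_lin X (int t)))"
    using cost_gradient[OF cost, of t X] by blast
  have "norm (y_free (int t) + y_lin X (int t)) \<le> cy * N"
    using norm_ysur_le[where Ms="\<lambda>_. X", OF noise_le] X by (simp add: ysur_const)
  with gx Gc0 have gxb: "norm gx \<le> Gc * cy * N" by (metis mult.assoc mult_left_mono order.trans)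
  have "norm (- (K *v y_free (int t)) + v_lin X (int t)) \<le> cv * N"
    using norm_vsur_le[where Ms="\<lambda>_. X", OF noise_le] X by (simp add: vsur_const)
  with gu Gc0 have gub: "norm gu \<le> Gc * cv * N" by (metis mult.assoc mult_left_mono order.trans)
  have "\<bar>gradM H (\<lambda>M. fsur A B K H c w t M \<omega>) X i $ r $ s\<bar>
      = \<bar>gx \<bullet> y_lin (pol_unit i r s) (int t) + gu \<bullet> v_lin (pol_unit i r s) (int t)\<bar>"
    by (simp add: gradM_fsur_entry[where c=c and t=t and gx=gx and gu=gu and X=X, OF dg i])
  also have "\<dots> \<le> norm gx * norm (y_lin (pol_unit i r s) (int t)) + norm gu * norm (v_lin (pol_unit i r s) (int t))"
    by (rule order.trans[OF abs_triangle_ineq add_mono[OF Cauchy_Schwarz_ineq2 Cauchy_Schwarz_ineq2]])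
  also have "\<dots> \<le> (Gc * cy * N) * (cresp * N) + (Gc * cv * N) * ((\<kappa> * cresp + 1) * N)"
    by (intro add_mono mult_mono gxb gub norm_y_lin_unit_le[OF noise_le i] norm_v_lin_unit_le[OF noise_le i])
      (auto simp: Gc0 N0 cy_nonneg cv_nonneg)
  also have "\<dots> = cgrad_entry Gc * N^2" by (simp add: cgrad_entry_def power2_eq_square algebra_simps)
  finally show ?thesis .
qed

lemma frob2_gradM_le:
  assumes cost: "cost_assm Gc c" and X: "X \<in> S" and noise_le: "noise_le (int t) N"
  shows "frob2 H (gradM H (\<lambda>M. fsur A B K H c w t M \<omega>) X)
      \<le> real H * (real CARD('nu) * real CARD('nx)) * (cgrad_entry Gc * N^2)^2"
proof -
  have "frob2 H (gradM H (\<lambda>M. fsur A B K H c w t M \<omega>) X)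
      \<le> (\<Sum>i<H. \<Sum>r\<in>(UNIV::'nu set). \<Sum>s\<in>(UNIV::'nx set). (cgrad_entry Gc * N^2)^2)"
    unfolding frob2_def norm_matrix_power2
  proof (intro sum_mono)
    fix i r s assume "i \<in> {..<H}"
    then have "\<bar>gradM H (\<lambda>M. fsur A B K H c w t M \<omega>) X i $ r $ s\<bar>^2 \<le> (cgrad_entry Gc * N^2)^2"
      by (intro power_mono abs_gradM_fsur_le[OF cost X noise_le]) auto
    then show "(gradM H (\<lambda>M. fsur A B K H c w t M \<omega>) X i $ r $ s)^2 \<le> (cgrad_entry Gc * N^2)^2" by simp
  qed
  then show ?thesis by simp
qed

lemma Fsur_minus_fsur_le:
  assumes cost: "cost_assm Gc c" and noise_le: "noise_le (int t) N"
    and hist: "\<And>j. j \<le> H \<Longrightarrow> Ms (int t - 1 - int j) \<in> S" and cur: "Ms (int t) \<in> S"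
    and d: "\<And>j k. j \<le> H \<Longrightarrow> k < H \<Longrightarrow> opnorm (Ms (int t - 1 - int j) k - Ms (int t) k) \<le> \<delta>"
  shows "Fsur A B K H c w Ms t \<omega> - fsur A B K H c w t (Ms (int t)) \<omega> \<le> Gc * (cy + \<kappa> * cv) * cresp * H * \<delta> * N^2"
proof -
  let ?y1 = "ysur A B K H w Ms (int t) \<omega>" and ?v1 = "vsur A B K H w Ms (int t) \<omega>"
  let ?y2 = "ysur A B K H w (\<lambda>_. Ms (int t)) (int t) \<omega>" and ?v2 = "vsur A B K H w (\<lambda>_. Ms (int t)) (int t) \<omega>"
  have dy: "?y1 - ?y2 = y_pol Ms (int t) - y_pol (\<lambda>_. Ms (int t)) (int t)" by (simp add: ysur_eq)
  have Dy: "norm (?y1 - ?y2) \<le> cresp * H * \<delta> * N"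
    unfolding dy by (rule norm_y_pol_diff_le[OF noise_le]) (use d in auto)
  have "?v1 - ?v2 = - (K *v (?y1 - ?y2))"
    by (simp add: vsur_eq v_pol_def matrix_vector_mult_diff_distrib)
  then have "norm (?v1 - ?v2) \<le> \<kappa> * norm (?y1 - ?y2)" by (simp add: norm_K_mv_le)
  also have "\<dots> \<le> \<kappa> * (cresp * H * \<delta> * N)" by (rule mult_left_mono[OF Dy kappa_nonneg])
  finally have Dv: "norm (?v1 - ?v2) \<le> \<kappa> * (cresp * H * \<delta> * N)" .
  have "Fsur A B K H c w Ms t \<omega> - fsur A B K H c w t (Ms (int t)) \<omega>
      \<le> Gc * (norm ?y1 * norm (?y1 - ?y2) + norm ?v1 * norm (?v1 - ?v2))"
    unfolding Fsur_def fsur_def by (rule cost_assm_diff_le[OF cost])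
  also have "\<dots> \<le> Gc * ((cy * N) * (cresp * H * \<delta> * N) + (cv * N) * (\<kappa> * (cresp * H * \<delta> * N)))"
    using cost_assm_Gc_ge_1[OF cost] noise_le_nonneg[OF noise_le] cy_nonneg cv_nonneg
      norm_ysur_le[where Ms=Ms, OF noise_le hist] norm_vsur_le[where Ms=Ms, OF noise_le hist cur]
    by (intro mult_left_mono add_mono mult_mono Dy Dv) auto
  also have "\<dots> = Gc * (cy + \<kappa> * cv) * cresp * H * \<delta> * N^2" by (simp add: power2_eq_square algebra_simps)
  finally show ?thesis .
qed

end

section \<open>Online gradient descent on the surrogate costs\<close>

lemma square_le_young: "0 < \<nu> \<Longrightarrow> x^2 \<le> x^4 / (2 * \<nu>) + \<nu> / 2" for x :: real
proof -
  assume nu: "0 < \<nu>"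
  have "0 \<le> (x^2 - \<nu>)^2" by simp
  then have "2 * \<nu> * x^2 \<le> x^4 + \<nu>^2" by (simp add: power2_eq_square algebra_simps power4_eq_xxxx)
  then show ?thesis using nu by (simp add: field_simps power2_eq_square)
qed

context stable_system
begin

definition "diam2 = 16 * kB^2 * \<kappa>^6 * real CARD('nx) / \<gamma>"

lemma frob2_diff_Mset_le:
  fixes P Q :: "('nx,'nu) pol"
  assumes "P \<in> S" "Q \<in> S"
  shows "frob2 H (\<lambda>i. P i - Q i) \<le> diam2"
proof -
  let ?g = "1 - (1 - \<gamma>)^2"
  have a: "0 \<le> (1-\<gamma>)^2" by simp
  have "(1-\<gamma>) * (1-\<gamma>) \<le> (1-\<gamma>) * 1" using gamma_pos gamma_less_1 by (intro mult_left_mono) auto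
  then have b: "(1-\<gamma>)^2 \<le> 1 - \<gamma>" by (simp add: power2_eq_square)
  have gg: "0 < ?g" "?g \<le> 1" "\<gamma> \<le> ?g" using a b gamma_pos by auto
  have "frob2 H (\<lambda>i. P i - Q i) \<le> (\<Sum>i<H. (2 * sqrt (real CARD('nx)) * Mrad kB \<kappa> \<gamma> i)^2)"
    unfolding frob2_def
  proof (intro sum_mono power_mono)
    fix i assume "i \<in> {..<H}"
    then have i: "i < H" by simp
    have "norm (P i - Q i) \<le> norm (P i) + norm (Q i)" by (rule norm_triangle_ineq4)
    also have "\<dots> \<le> sqrt (real CARD('nx)) * opnorm (P i) + sqrt (real CARD('nx)) * opnorm (Q i)"
      using norm_le_sqrt_card_opnorm[of "P i"] norm_le_sqrt_card_opnorm[of "Q i"] by simp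
    also have "\<dots> \<le> sqrt (real CARD('nx)) * Mrad kB \<kappa> \<gamma> i + sqrt (real CARD('nx)) * Mrad kB \<kappa> \<gamma> i"
      using assms i by (intro add_mono mult_left_mono Mset_opnorm_le) auto
    finally show "norm (P i - Q i) \<le> 2 * sqrt (real CARD('nx)) * Mrad kB \<kappa> \<gamma> i" by simp
  qed simp
  also have "\<dots> = 16 * kB^2 * \<kappa>^6 * real CARD('nx) * (\<Sum>i<H. ((1 - \<gamma>)^2)^i)"
    by (simp add: Mrad_def sum_distrib_left power_mult_distrib power_mult[symmetric] mult.commute algebra_simps)
  also have "\<dots> \<le> 16 * kB^2 * \<kappa>^6 * real CARD('nx) * (1 / ?g)"
  proof (intro mult_left_mono)
    show "(\<Sum>i<H. ((1 - \<gamma>)^2)^i) \<le> 1 / ?g" using geometric_sum_le[OF gg(1,2), of H] by simp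
  qed simp
  also have "\<dots> \<le> 16 * kB^2 * \<kappa>^6 * real CARD('nx) * (1 / \<gamma>)"
    using gg gamma_pos by (intro mult_left_mono divide_left_mono) auto
  finally show ?thesis by (simp add: diam2_def)
qed

definition "diam = sqrt diam2"

lemma frob_diff_Mset_le: "(P :: ('nx,'nu) pol) \<in> S \<Longrightarrow> Q \<in> S \<Longrightarrow> frob H (\<lambda>i. P i - Q i) \<le> diam"
  unfolding frob_eq_sqrt_frob2 diam_def by (rule real_sqrt_le_mono[OF frob2_diff_Mset_le])

lemma diam_nonneg: "0 \<le> diam"
  unfolding diam_def diam2_def using gamma_pos by simp

end

locale regret_constants = stable_system A B K H kB \<kappa> \<gamma>
  for A :: "real^'nx::finite^'nx" and B :: "real^'nu::finite^'nx" and K H kB \<kappa> \<gamma> +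
  fixes Gc :: real
  assumes Gc_ge_1: "1 \<le> Gc"
begin

definition "cgrad = sqrt (real H * (real CARD('nu) * real CARD('nx))) * cgrad_entry Gc"
definition "clip = Gc * (cy + \<kappa> * cv) * cresp * H"
definition "cvar = (cgrad^2 / 2 + clip * (H + 1) * cgrad) * real (3*H+2)"

lemma cgrad_nonneg: "0 \<le> cgrad"
  unfolding cgrad_def cgrad_entry_def using Gc_ge_1 cy_nonneg cv_nonneg cresp_nonneg kappa_nonneg by simp

lemma clip_nonneg: "0 \<le> clip"
  unfolding clip_def using Gc_ge_1 cy_nonneg cv_nonneg cresp_nonneg kappa_nonneg by simp

end

definition noise_moment4 :: "(nat \<Rightarrow> 'w \<Rightarrow> 'a::real_normed_vector) \<Rightarrow> nat \<Rightarrow> 'w \<Rightarrow> real" where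
  "noise_moment4 w n \<omega> = (\<Sum>s<n. norm (w s \<omega>)^4)"

context noise_window
begin

text \<open>The window has length \<open>3H+2\<close> so that \<open>noise_max t\<close> bounds the disturbances entering
  every step \<open>t-H-1, \<dots>, t\<close>, over which the iterates drift.\<close>

definition noise_max :: "nat \<Rightarrow> real" where
  "noise_max t = Max ((\<lambda>k. norm (wz w \<omega> (int t - int k))) ` {1..3*H+2})"

lemma norm_wz_le_noise_max: "k \<in> {1..3*H+2} \<Longrightarrow> norm (wz w \<omega> (int t - int k)) \<le> noise_max t"
  unfolding noise_max_def by (rule Max_ge) auto

lemma noise_max_attained: "\<exists>k\<in>{1..3*H+2}. noise_max t = norm (wz w \<omega> (int t - int k))"
proof -
  have "noise_max t \<in> (\<lambda>k. norm (wz w \<omega> (int t - int k))) ` {1..3*H+2}"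
    unfolding noise_max_def by (rule Max_in) auto
  then show ?thesis by auto
qed

lemma noise_max_pow4_le: "(noise_max t)^4 \<le> (\<Sum>k\<in>{1..3*H+2}. (norm (wz w \<omega> (int t - int k)))^4)"
proof -
  obtain k where k: "k \<in> {1..3*H+2}" "noise_max t = norm (wz w \<omega> (int t - int k))" using noise_max_attained by blast
  show ?thesis unfolding k(2)
    by (rule member_le_sum[where f="\<lambda>k. (norm (wz w \<omega> (int t - int k)))^4"]) (use k in auto)
qed

lemma noise_le_noise_max: "u \<le> t \<Longrightarrow> t \<le> u + H + 1 \<Longrightarrow> noise_le (int u) (noise_max t)"
  unfolding noise_le_def
proof
  fix k assume ut: "u \<le> t" "t \<le> u + H + 1" and k: "k \<in> {1..2*H+1}"
  have e: "int u - int k = int t - int (t - u + k)" using ut by simp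
  show "norm (wz w \<omega> (int u - int k)) \<le> noise_max t" unfolding e by (rule norm_wz_le_noise_max) (use ut k in auto)
qed

lemma noise_le_noise_max_self: "noise_le (int t) (noise_max t)" by (rule noise_le_noise_max) auto

lemma sum_shifted_noise_pow4_le:
  assumes k: "1 \<le> k" and F: "finite F" and m: "\<And>t. t \<in> F \<Longrightarrow> k \<le> t \<Longrightarrow> t - k < m"
  shows "(\<Sum>t\<in>F. (norm (wz w \<omega> (int t - int k)))^4) \<le> (\<Sum>s<m. (norm (w s \<omega>))^4)"
proof -
  let ?\<phi> = "\<lambda>s. (norm (w s \<omega>))^4"
  have "(\<Sum>t\<in>F. (norm (wz w \<omega> (int t - int k)))^4) = (\<Sum>t\<in>F. if t \<in> {k..} then ?\<phi> (t - k) else 0)"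
    by (intro sum.cong refl) (auto simp: wz_def nat_diff_distrib)
  also have "\<dots> = (\<Sum>t\<in>F \<inter> {k..}. ?\<phi> (t - k))" by (simp only: sum.inter_restrict[OF F])
  also have "\<dots> = (\<Sum>s\<in>(\<lambda>t. t - k) ` (F \<inter> {k..}). ?\<phi> s)"
    by (subst sum.reindex) (auto simp: inj_on_def)
  also have "\<dots> \<le> (\<Sum>s<m. ?\<phi> s)"
    by (intro sum_mono2) (use m in auto)
  finally show ?thesis .
qed

lemma sum_noise_max_pow4_le:
  "(\<Sum>t<T. (noise_max t)^4) \<le> real (3*H+2) * (\<Sum>s<T. (norm (w s \<omega>))^4)"
proof -
  have "(\<Sum>t<T. (noise_max t)^4) \<le> (\<Sum>t<T. \<Sum>k\<in>{1..3*H+2}. (norm (wz w \<omega> (int t - int k)))^4)"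
    by (intro sum_mono noise_max_pow4_le)
  also have "\<dots> = (\<Sum>k\<in>{1..3*H+2}. \<Sum>t<T. (norm (wz w \<omega> (int t - int k)))^4)" by (rule sum.swap)
  also have "\<dots> \<le> (\<Sum>k\<in>{1..3*H+2}. \<Sum>s<T. (norm (w s \<omega>))^4)"
    by (intro sum_mono sum_shifted_noise_pow4_le) auto
  finally show ?thesis by simp
qed

lemma sum_noise_max_pow4_initial_le:
  "(\<Sum>t\<in>{t. t < T \<and> t \<le> H}. (noise_max t)^4) \<le> real (3*H+2) * (\<Sum>s<H. (norm (w s \<omega>))^4)"
proof -
  have fin: "finite {t. t < T \<and> t \<le> H}" by simp
  have "(\<Sum>t\<in>{t. t < T \<and> t \<le> H}. (noise_max t)^4) \<le> (\<Sum>t\<in>{t. t < T \<and> t \<le> H}. \<Sum>k\<in>{1..3*H+2}. (norm (wz w \<omega> (int t - int k)))^4)"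
    by (intro sum_mono noise_max_pow4_le)
  also have "\<dots> = (\<Sum>k\<in>{1..3*H+2}. \<Sum>t\<in>{t. t < T \<and> t \<le> H}. (norm (wz w \<omega> (int t - int k)))^4)" by (rule sum.swap)
  also have "\<dots> \<le> (\<Sum>k\<in>{1..3*H+2}. \<Sum>s<H. (norm (w s \<omega>))^4)"
    by (intro sum_mono sum_shifted_noise_pow4_le fin) auto
  finally show ?thesis by simp
qed

end

locale ogd_run = noise_window A B K H w \<omega> kB \<kappa> \<gamma> + regret_constants A B K H kB \<kappa> \<gamma> Gc
  for A :: "real^'nx::finite^'nx" and B :: "real^'nu::finite^'nx" and K H w \<omega> kB \<kappa> \<gamma> Gc +
  fixes c :: "nat \<Rightarrow> real ^'nx \<Rightarrow> real ^'nu \<Rightarrow> real" and \<eta> :: real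
    and Minit :: "int \<Rightarrow> ('nx,'nu) pol" and M :: "('nx,'nu) pol"
  assumes cost: "cost_assm Gc c" and eta_pos: "0 < \<eta>"
    and Minit: "\<And>s. - int H - 1 \<le> s \<Longrightarrow> s \<le> 0 \<Longrightarrow> Minit s \<in> S"
    and M_mem: "M \<in> S"
begin

abbreviation "Mt t \<equiv> ogd A B K H c w \<eta> S (Minit 0) t \<omega>"
abbreviation "Ms \<equiv> Mfull A B K H c w \<eta> S Minit \<omega>"
abbreviation "grad t \<equiv> gradM H (\<lambda>M. fsur A B K H c w t M \<omega>) (Mt t)"

lemma Mt_mem: "Mt t \<in> S"
proof (induction t)
  case 0 then show ?case using Minit[of 0] by simp
next
  case (Suc t) then show ?case by (simp add: Let_def proj_mem[OF M_mem])
qed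

lemma Mt_Suc: "Mt (Suc t) = proj H S (\<lambda>i. Mt t i - \<eta> *\<^sub>R grad t i)"
  by (simp add: Let_def)

lemma Ms_int: "Ms (int t) = Mt t"
  by (cases "t = 0") (simp_all add: Mfull_def)

lemma Ms_mem: "- int H - 1 \<le> s \<Longrightarrow> Ms s \<in> S"
proof (cases "s \<le> 0")
  case True
  assume "- int H - 1 \<le> s" then show ?thesis using True Minit by (simp add: Mfull_def)
next
  case False
  then have "s = int (nat s)" by simp
  then show ?thesis using Mt_mem[of "nat s"] Ms_int[of "nat s"] by metis
qed

lemma ogd_inner_le:
  "frob_inner H (grad t) (\<lambda>i. Mt t i - M i) \<le> (frob2 H (\<lambda>i. Mt t i - M i) - frob2 H (\<lambda>i. Mt (Suc t) i - M i)) / (2 * \<eta>)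
      + \<eta> / 2 * frob2 H (grad t)"
proof -
  let ?D = "\<lambda>i. Mt t i - M i" and ?g = "grad t"
  have "frob2 H (\<lambda>i. Mt (Suc t) i - M i) \<le> frob2 H (\<lambda>i. (Mt t i - \<eta> *\<^sub>R ?g i) - M i)"
    unfolding Mt_Suc by (rule proj_nonexpansive[OF M_mem])
  also have "frob2 H (\<lambda>i. (Mt t i - \<eta> *\<^sub>R ?g i) - M i) = frob2 H (\<lambda>i. ?D i + (- \<eta>) *\<^sub>R ?g i)"
    by (simp add: algebra_simps)
  also have "\<dots> = frob2 H ?D + 2 * frob_inner H ?D (\<lambda>i. (- \<eta>) *\<^sub>R ?g i) + frob2 H (\<lambda>i. (- \<eta>) *\<^sub>R ?g i)"
    by (rule frob2_add)
  also have "frob_inner H ?D (\<lambda>i. (- \<eta>) *\<^sub>R ?g i) = - \<eta> * frob_inner H ?g ?D"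
    unfolding frob_inner_def by (simp add: sum_distrib_left inner_commute sum_negf)
  also have "frob2 H (\<lambda>i. (- \<eta>) *\<^sub>R ?g i) = \<eta>^2 * frob2 H ?g"
    unfolding frob2_def by (simp add: sum_distrib_left power_mult_distrib)
  finally have "2 * \<eta> * frob_inner H ?g ?D \<le> frob2 H ?D - frob2 H (\<lambda>i. Mt (Suc t) i - M i) + \<eta>^2 * frob2 H ?g"
    by simp
  then show ?thesis using eta_pos by (simp add: field_simps power2_eq_square)
qed

lemma frob_Mt_step_le: "frob H (\<lambda>i. Mt (Suc t) i - Mt t i) \<le> \<eta> * frob H (grad t)"
proof -
  have "frob2 H (\<lambda>i. Mt (Suc t) i - Mt t i) \<le> frob2 H (\<lambda>i. (Mt t i - \<eta> *\<^sub>R grad t i) - Mt t i)"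
    unfolding Mt_Suc by (rule proj_nonexpansive[OF Mt_mem])
  also have "\<dots> = \<eta>^2 * frob2 H (grad t)"
    unfolding frob2_def by (simp add: sum_distrib_left power_mult_distrib)
  finally have "sqrt (frob2 H (\<lambda>i. Mt (Suc t) i - Mt t i)) \<le> sqrt (\<eta>^2 * frob2 H (grad t))"
    by (rule real_sqrt_le_mono)
  then show ?thesis using eta_pos by (simp add: frob_eq_sqrt_frob2 real_sqrt_mult)
qed

lemma fsur_Mt_minus_le: "fsur A B K H c w t (Mt t) \<omega> - fsur A B K H c w t M \<omega> \<le> frob_inner H (grad t) (\<lambda>i. Mt t i - M i)"
proof -
  obtain gx gu where dg: "((\<lambda>(x',u'). c t x' u') has_derivative (\<lambda>(dx,du). gx \<bullet> dx + gu \<bullet> du))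
        (at (y_free (int t) + y_lin (Mt t) (int t), - (K *v y_free (int t)) + v_lin (Mt t) (int t)))"
    using cost_gradient[OF cost, of t "Mt t"] by blast
  show ?thesis unfolding frob_inner_def by (rule fsur_diff_le_gradM[OF cost dg])
qed

lemma ogd_regret_le:
  "(\<Sum>t<T. fsur A B K H c w t (Mt t) \<omega> - fsur A B K H c w t M \<omega>)
     \<le> frob2 H (\<lambda>i. Mt 0 i - M i) / (2 * \<eta>) + \<eta> / 2 * (\<Sum>t<T. frob2 H (grad t))"
proof -
  let ?d = "\<lambda>t. frob2 H (\<lambda>i. Mt t i - M i)"
  have "(\<Sum>t<T. fsur A B K H c w t (Mt t) \<omega> - fsur A B K H c w t M \<omega>)
      \<le> (\<Sum>t<T. (?d t - ?d (Suc t)) / (2 * \<eta>) + \<eta> / 2 * frob2 H (grad t))"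
    by (intro sum_mono order.trans[OF fsur_Mt_minus_le ogd_inner_le])
  also have "\<dots> = (\<Sum>t<T. ?d t - ?d (Suc t)) / (2 * \<eta>) + \<eta> / 2 * (\<Sum>t<T. frob2 H (grad t))"
    by (simp add: sum.distrib sum_divide_distrib sum_distrib_left)
  also have "(\<Sum>t<T. ?d t - ?d (Suc t)) = ?d 0 - ?d T"
    by (rule sum_lessThan_telescope')
  also have "(?d 0 - ?d T) / (2 * \<eta>) \<le> ?d 0 / (2 * \<eta>)"
    using eta_pos frob2_nonneg[of H "\<lambda>i. Mt T i - M i"] by (simp add: divide_right_mono)
  finally show ?thesis by simp
qed

lemma frob2_grad_le: "noise_le (int u) N \<Longrightarrow> frob2 H (grad u) \<le> cgrad^2 * N^4"
proof -
  assume noise_le: "noise_le (int u) N"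
  have "frob2 H (grad u) \<le> real H * (real CARD('nu) * real CARD('nx)) * (cgrad_entry Gc * N^2)^2"
    by (rule frob2_gradM_le[OF cost Mt_mem noise_le])
  also have "\<dots> = cgrad^2 * N^4" unfolding cgrad_def by (simp add: power_mult_distrib)
  finally show ?thesis .
qed

lemma frob_grad_le: "noise_le (int u) N \<Longrightarrow> frob H (grad u) \<le> cgrad * N^2"
proof -
  assume noise_le: "noise_le (int u) N"
  have "frob H (grad u) \<le> sqrt (cgrad^2 * N^4)" unfolding frob_eq_sqrt_frob2 by (rule real_sqrt_le_mono[OF frob2_grad_le[OF noise_le]])
  also have "cgrad^2 * N^4 = (cgrad * N^2)^2" by (simp add: power_mult_distrib power_mult[symmetric])
  also have "sqrt ((cgrad * N^2)^2) = cgrad * N^2" using cgrad_nonneg by simp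
  finally show ?thesis .
qed

lemma frob_Mt_diff_le: "a \<le> b \<Longrightarrow> frob H (\<lambda>i. Mt a i - Mt b i) \<le> \<eta> * (\<Sum>u\<in>{a..<b}. frob H (grad u))"
proof (induction b)
  case 0 then show ?case by (simp add: frob_eq_sqrt_frob2 frob2_def)
next
  case (Suc b)
  show ?case
  proof (cases "a = Suc b")
    case True then show ?thesis by (simp add: frob_eq_sqrt_frob2 frob2_def)
  next
    case False
    then have ab: "a \<le> b" using Suc by simp
    have "frob H (\<lambda>i. Mt a i - Mt (Suc b) i) \<le> frob H (\<lambda>i. Mt a i - Mt b i) + frob H (\<lambda>i. Mt b i - Mt (Suc b) i)"
      by (rule frob_diff_triangle)
    also have "frob H (\<lambda>i. Mt b i - Mt (Suc b) i) \<le> \<eta> * frob H (grad b)"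
      using frob_Mt_step_le[of b] frob_diff_commute[of H "Mt b" "Mt (Suc b)"] by simp
    also have "frob H (\<lambda>i. Mt a i - Mt b i) \<le> \<eta> * (\<Sum>u\<in>{a..<b}. frob H (grad u))" by (rule Suc.IH[OF ab])
    finally show ?thesis using ab by (simp add: distrib_left)
  qed
qed

text \<open>A bound on \<open>\<parallel>M\<^sub>t\<^sub>-\<^sub>1\<^sub>-\<^sub>j - M\<^sub>t\<parallel>\<close> for \<open>j \<le> H\<close>: during the first \<open>H\<close> steps the
  comparison involves the arbitrary initial policies and costs the diameter of \<open>S\<close>.\<close>

definition "drift t = (if t \<le> H then diam else 0) + \<eta> * (H + 1) * cgrad * (noise_max t)^2"

lemma drift_window_le: "\<eta> * (\<Sum>u\<in>{t - (H+1)..<t}. frob H (grad u)) \<le> \<eta> * (H + 1) * cgrad * (noise_max t)^2"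
proof -
  have "(\<Sum>u\<in>{t - (H+1)..<t}. frob H (grad u)) \<le> (\<Sum>u\<in>{t - (H+1)..<t}. cgrad * (noise_max t)^2)"
    by (intro sum_mono frob_grad_le noise_le_noise_max) auto
  also have "\<dots> = real (card {t - (H+1)..<t}) * (cgrad * (noise_max t)^2)" by simp
  also have "\<dots> \<le> real (H + 1) * (cgrad * (noise_max t)^2)"
    by (intro mult_right_mono) (auto simp: cgrad_nonneg)
  finally have "\<eta> * (\<Sum>u\<in>{t - (H+1)..<t}. frob H (grad u)) \<le> \<eta> * (real (H + 1) * (cgrad * (noise_max t)^2))"
    by (rule mult_left_mono) (use eta_pos in auto)
  then show ?thesis by (simp add: algebra_simps)
qed

lemma frob_Ms_diff_le:
  assumes j: "j \<le> H"
  shows "frob H (\<lambda>i. Ms (int t - 1 - int j) i - Ms (int t) i)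
    \<le> (if t \<le> H then diam else 0) + \<eta> * (\<Sum>u\<in>{t - (H+1)..<t}. frob H (grad u))"
proof (cases "j < t")
  case True
  have "int t - 1 - int j = int (t - 1 - j)" using True by simp
  then have "frob H (\<lambda>i. Ms (int t - 1 - int j) i - Ms (int t) i) \<le> \<eta> * (\<Sum>u\<in>{t - 1 - j..<t}. frob H (grad u))"
    by (simp only: Ms_int) (rule frob_Mt_diff_le, simp)
  also have "\<dots> \<le> \<eta> * (\<Sum>u\<in>{t - (H+1)..<t}. frob H (grad u))"
    using eta_pos j by (intro mult_left_mono sum_mono2 frob_nonneg) auto
  finally show ?thesis using diam_nonneg by (cases "t \<le> H") auto
next
  case False
  then have "t \<le> H" and "t - (H+1) = 0" using j by auto
  have "Ms (int t - 1 - int j) \<in> S" using j by (intro Ms_mem) auto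
  have "frob H (\<lambda>i. Ms (int t - 1 - int j) i - Ms (int t) i)
      \<le> frob H (\<lambda>i. Ms (int t - 1 - int j) i - Mt 0 i) + frob H (\<lambda>i. Mt 0 i - Mt t i)"
    unfolding Ms_int by (rule frob_diff_triangle)
  also have "\<dots> \<le> diam + \<eta> * (\<Sum>u\<in>{0..<t}. frob H (grad u))"
    by (intro add_mono frob_diff_Mset_le[OF \<open>Ms (int t - 1 - int j) \<in> S\<close> Mt_mem] frob_Mt_diff_le) simp
  finally show ?thesis using \<open>t \<le> H\<close> \<open>t - (H+1) = 0\<close> by simp
qed

lemma opnorm_Ms_diff_le_drift:
  assumes "j \<le> H" "k < H"
  shows "opnorm (Ms (int t - 1 - int j) k - Ms (int t) k) \<le> drift t"
proof -
  have "opnorm (Ms (int t - 1 - int j) k - Ms (int t) k) \<le> frob H (\<lambda>i. Ms (int t - 1 - int j) i - Ms (int t) i)"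
    using opnorm_le_norm norm_le_frob[OF assms(2), of "\<lambda>i. Ms (int t - 1 - int j) i - Ms (int t) i"]
    by (rule order.trans)
  also have "\<dots> \<le> drift t"
    using frob_Ms_diff_le[OF assms(1), of t] drift_window_le[of t] unfolding drift_def by linarith
  finally show ?thesis .
qed

lemma drift_nonneg: "0 \<le> drift t" unfolding drift_def using diam_nonneg eta_pos cgrad_nonneg by simp

lemma Fsur_minus_fsur_Mt_le: "Fsur A B K H c w Ms t \<omega> - fsur A B K H c w t (Mt t) \<omega> \<le> clip * drift t * (noise_max t)^2"
proof -
  have "Fsur A B K H c w Ms t \<omega> - fsur A B K H c w t (Ms (int t)) \<omega> \<le> Gc * (cy + \<kappa> * cv) * cresp * H * drift t * (noise_max t)^2"
    by (rule Fsur_minus_fsur_le[OF cost noise_le_noise_max_self _ _ opnorm_Ms_diff_le_drift]) (auto intro: Ms_mem)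
  then show ?thesis by (simp add: Ms_int clip_def)
qed

lemma regret_le_noise_max:
  "(\<Sum>t<T. Fsur A B K H c w Ms t \<omega>) - (\<Sum>t<T. fsur A B K H c w t M \<omega>)
     \<le> diam2 / (2 * \<eta>) + \<eta> / 2 * (\<Sum>t<T. cgrad^2 * (noise_max t)^4) + (\<Sum>t<T. clip * drift t * (noise_max t)^2)"
proof -
  have "(\<Sum>t<T. Fsur A B K H c w Ms t \<omega>) - (\<Sum>t<T. fsur A B K H c w t M \<omega>)
      = (\<Sum>t<T. Fsur A B K H c w Ms t \<omega> - fsur A B K H c w t (Mt t) \<omega>)
        + (\<Sum>t<T. fsur A B K H c w t (Mt t) \<omega> - fsur A B K H c w t M \<omega>)"
    by (simp add: sum_subtractf)
  also have "\<dots> \<le> (\<Sum>t<T. clip * drift t * (noise_max t)^2)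
      + (frob2 H (\<lambda>i. Mt 0 i - M i) / (2 * \<eta>) + \<eta> / 2 * (\<Sum>t<T. frob2 H (grad t)))"
    by (intro add_mono sum_mono Fsur_minus_fsur_Mt_le ogd_regret_le)
  also have "\<dots> \<le> (\<Sum>t<T. clip * drift t * (noise_max t)^2) + (diam2 / (2 * \<eta>) + \<eta> / 2 * (\<Sum>t<T. cgrad^2 * (noise_max t)^4))"
    using eta_pos clip_nonneg drift_nonneg by (intro add_mono divide_right_mono mult_left_mono sum_mono frob2_diff_Mset_le[OF Mt_mem M_mem] frob2_grad_le noise_le_noise_max_self) auto
  finally show ?thesis by simp
qed

lemma sum_clip_drift_eq:
  "(\<Sum>t<T. clip * drift t * (noise_max t)^2)
    = clip * diam * (\<Sum>t<T. if t \<le> H then (noise_max t)^2 else 0)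
      + \<eta> * (clip * (H + 1) * cgrad) * (\<Sum>t<T. (noise_max t)^4)"
proof -
  have "clip * drift t * (noise_max t)^2
      = clip * diam * (if t \<le> H then (noise_max t)^2 else 0) + \<eta> * (clip * (H + 1) * cgrad) * (noise_max t)^4" for t
    unfolding drift_def by (cases "t \<le> H") (simp_all add: algebra_simps power2_eq_square power4_eq_xxxx)
  then show ?thesis by (simp only: sum.distrib sum_distrib_left[symmetric])
qed

lemma sum_initial_noise_max_square_le:
  assumes "0 < \<nu>"
  shows "(\<Sum>t<T. if t \<le> H then (noise_max t)^2 else 0)
    \<le> real (3*H+2) * (\<Sum>s<H. (norm (w s \<omega>))^4) / (2 * \<nu>) + real (H + 1) * \<nu> / 2"
proof -
  let ?I = "{t. t < T \<and> t \<le> H}"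
  have "(\<Sum>t<T. if t \<le> H then (noise_max t)^2 else 0) = (\<Sum>t\<in>{t\<in>{..<T}. t \<le> H}. (noise_max t)^2)"
    by (rule sum.inter_filter[symmetric]) simp
  also have "\<dots> = (\<Sum>t\<in>?I. (noise_max t)^2)" by (rule sum.cong) auto
  also have "\<dots> \<le> (\<Sum>t\<in>?I. (noise_max t)^4 / (2 * \<nu>) + \<nu> / 2)"
    by (intro sum_mono square_le_young assms)
  also have "\<dots> = (\<Sum>t\<in>?I. (noise_max t)^4) / (2 * \<nu>) + real (card ?I) * \<nu> / 2"
    by (simp add: sum.distrib sum_divide_distrib)
  also have "\<dots> \<le> real (3*H+2) * (\<Sum>s<H. (norm (w s \<omega>))^4) / (2 * \<nu>) + real (H + 1) * \<nu> / 2"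
  proof (intro add_mono divide_right_mono)
    have "card ?I \<le> card {..H}" by (intro card_mono) auto
    then show "real (card ?I) * \<nu> \<le> real (H + 1) * \<nu>" using assms by simp
  qed (use assms sum_noise_max_pow4_initial_le in auto)
  finally show ?thesis .
qed

lemma regret_le_noise_moments:
  assumes nu: "0 < \<nu>"
  shows "(\<Sum>t<T. Fsur A B K H c w Ms t \<omega>) - (\<Sum>t<T. fsur A B K H c w t M \<omega>)
     \<le> diam2 / (2 * \<eta>) + \<eta> * cvar * noise_moment4 w T \<omega>
       + clip * diam * (real (3*H+2) * noise_moment4 w H \<omega> / (2 * \<nu>) + real (H + 1) * \<nu> / 2)"
proof -
  have "(\<Sum>t<T. Fsur A B K H c w Ms t \<omega>) - (\<Sum>t<T. fsur A B K H c w t M \<omega>)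
     \<le> diam2 / (2 * \<eta>) + \<eta> / 2 * (\<Sum>t<T. cgrad^2 * (noise_max t)^4) + (\<Sum>t<T. clip * drift t * (noise_max t)^2)"
    by (rule regret_le_noise_max)
  also have "\<dots> = diam2 / (2 * \<eta>) + \<eta> * (cgrad^2 / 2 + clip * (H + 1) * cgrad) * (\<Sum>t<T. (noise_max t)^4)
      + clip * diam * (\<Sum>t<T. if t \<le> H then (noise_max t)^2 else 0)"
    unfolding sum_clip_drift_eq sum_distrib_left[symmetric] by (simp add: algebra_simps)
  also have "\<dots> \<le> diam2 / (2 * \<eta>) + \<eta> * (cgrad^2 / 2 + clip * (H + 1) * cgrad) * (real (3*H+2) * (\<Sum>s<T. (norm (w s \<omega>))^4))
      + clip * diam * (real (3*H+2) * (\<Sum>s<H. (norm (w s \<omega>))^4) / (2 * \<nu>) + real (H + 1) * \<nu> / 2)"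
    using eta_pos cgrad_nonneg clip_nonneg diam_nonneg
    by (intro add_mono mult_left_mono sum_noise_max_pow4_le sum_initial_noise_max_square_le nu order.refl
        mult_nonneg_nonneg add_nonneg_nonneg) auto
  also have "\<dots> = diam2 / (2 * \<eta>) + \<eta> * cvar * (\<Sum>s<T. (norm (w s \<omega>))^4)
      + clip * diam * (real (3*H+2) * (\<Sum>s<H. (norm (w s \<omega>))^4) / (2 * \<nu>) + real (H + 1) * \<nu> / 2)"
    by (simp add: cvar_def mult.assoc)
  finally show ?thesis unfolding noise_moment4_def .
qed

end

section \<open>Probability and arithmetic of the constants\<close>

lemma markov_inequality_nn_integral:
  assumes P: "prob_space \<Omega>" and f: "f \<in> borel_measurable \<Omega>" and f0: "\<And>x. 0 \<le> f x"
    and I: "(\<integral>\<^sup>+x. ennreal (f x) \<partial>\<Omega>) \<le> ennreal m" and a: "0 < a" and m: "0 \<le> m"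
  shows "measure \<Omega> {x\<in>space \<Omega>. a < f x} \<le> m / a"
proof -
  interpret prob_space \<Omega> by (rule P)
  have sub: "{x\<in>space \<Omega>. a < f x} \<subseteq> {x\<in>space \<Omega>. 1 \<le> ennreal (1/a) * ennreal (f x)}"
  proof
    fix x assume "x \<in> {x\<in>space \<Omega>. a < f x}"
    then have x: "x \<in> space \<Omega>" "a < f x" by auto
    have "ennreal (1/a) * ennreal (f x) = ennreal (f x / a)" using a f0[of x] by (simp add: ennreal_mult'' divide_inverse mult.commute)
    moreover have "1 \<le> f x / a" using x a by simp
    ultimately show "x \<in> {x\<in>space \<Omega>. 1 \<le> ennreal (1/a) * ennreal (f x)}" using x by simp
  qed
  have "emeasure \<Omega> {x\<in>space \<Omega>. a < f x} \<le> emeasure \<Omega> {x\<in>space \<Omega>. 1 \<le> ennreal (1/a) * ennreal (f x)}"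
    by (rule emeasure_mono[OF sub]) (use f in measurable)
  also have "\<dots> \<le> ennreal (1/a) * (\<integral>\<^sup>+x\<in>space \<Omega>. ennreal (f x) \<partial>\<Omega>)"
    by (rule nn_integral_Markov_inequality) (use f in measurable)
  also have "\<dots> = ennreal (1/a) * (\<integral>\<^sup>+x. ennreal (f x) \<partial>\<Omega>)" by (simp add: nn_set_integral_space)
  also have "\<dots> \<le> ennreal (1/a) * ennreal m" by (rule mult_left_mono[OF I]) simp
  also have "\<dots> = ennreal (m / a)" using a m by (simp add: ennreal_mult'' divide_inverse mult.commute)
  finally have "ennreal (measure \<Omega> {x\<in>space \<Omega>. a < f x}) \<le> ennreal (m / a)"
    by (simp add: emeasure_eq_measure)
  then show ?thesis using a m by (simp add: ennreal_le_iff)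
qed

lemma nn_integral_noise_moment4_le:
  assumes w_meas: "\<And>t. w t \<in> borel_measurable \<Omega>"
    and A2: "\<And>t. (\<integral>\<^sup>+\<omega>. ennreal (norm (w t \<omega>) ^ 4) \<partial>\<Omega>) \<le> ennreal (\<sigma>w ^ 4)"
  shows "(\<integral>\<^sup>+\<omega>. ennreal (noise_moment4 w m \<omega>) \<partial>\<Omega>) \<le> ennreal (real m * \<sigma>w ^ 4)"
proof -
  have [measurable]: "\<And>t. w t \<in> borel_measurable \<Omega>" by (rule w_meas)
  have "(\<integral>\<^sup>+\<omega>. ennreal (\<Sum>s<m. norm (w s \<omega>) ^ 4) \<partial>\<Omega>) = (\<integral>\<^sup>+\<omega>. (\<Sum>s<m. ennreal (norm (w s \<omega>) ^ 4)) \<partial>\<Omega>)"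
    by (simp add: sum_ennreal)
  also have "\<dots> = (\<Sum>s<m. \<integral>\<^sup>+\<omega>. ennreal (norm (w s \<omega>) ^ 4) \<partial>\<Omega>)"
    by (rule nn_integral_sum) measurable
  also have "\<dots> \<le> (\<Sum>s<m. ennreal (\<sigma>w ^ 4))" by (intro sum_mono A2)
  also have "\<dots> = ennreal (real m * \<sigma>w ^ 4)"
    by (simp add: ennreal_mult ennreal_of_nat_eq_real_of_nat zero_le_even_power)
  finally show ?thesis unfolding noise_moment4_def .
qed

lemma one_le_mult_real: "1 \<le> a \<Longrightarrow> 1 \<le> b \<Longrightarrow> 1 \<le> (a::real) * b"
  using mult_mono[of 1 a 1 b] by simp

lemma le_mult_of_one_le: "0 \<le> x \<Longrightarrow> 1 \<le> y \<Longrightarrow> x \<le> x * (y::real)"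
  using mult_left_mono[of 1 y x] by simp

lemma failure_prob_arith:
  fixes s m C K \<Lambda> L T J :: real
  assumes "0 \<le> s" "0 \<le> m" "s \<le> m^3" "s \<le> m^2" "0 < C" "0 \<le> K" "K * m < C"
    "2 * \<Lambda> \<le> K^3 * L^6" "0 < \<Lambda>" "0 < L" "0 < T" "0 \<le> J" "J \<le> K^2 * T * L^2"
  shows "s * \<Lambda> / (C^3 * L^6) + J * s / (2 * C^2 * T * L^2) \<le> K * m / C"
proof -
  define x where "x = K * m / C"
  have x: "0 \<le> x" "x < 1" using assms unfolding x_def by (auto simp: field_simps)
  have "s * \<Lambda> / (C^3 * L^6) \<le> m^3 * (K^3 * L^6 / 2) / (C^3 * L^6)"
    using assms by (intro divide_right_mono mult_mono) auto
  also have "\<dots> = x^3 / 2" using assms by (simp add: x_def field_simps power_mult_distrib)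
  also have "\<dots> \<le> x / 2" using power_decreasing[of 1 3 x] x by simp
  finally have t1: "s * \<Lambda> / (C^3 * L^6) \<le> x / 2" .
  have "J * s / (2 * C^2 * T * L^2) \<le> (K^2 * T * L^2) * m^2 / (2 * C^2 * T * L^2)"
    using assms by (intro divide_right_mono mult_mono) auto
  also have "\<dots> = x^2 / 2" using assms by (simp add: x_def field_simps power_mult_distrib)
  also have "\<dots> \<le> x / 2" using power_decreasing[of 1 2 x] x by simp
  finally have t2: "J * s / (2 * C^2 * T * L^2) \<le> x / 2" .
  show ?thesis using t1 t2 unfolding x_def by linarith
qed

lemma regret_bound_arith:
  fixes R Dsq \<eta> \<Lambda> Z c Dm Z' \<nu> a b C T L h h' D :: real
  assumes R: "R \<le> Dsq / (2 * \<eta>) + \<eta> * \<Lambda> * Z + c * Dm * (h * Z' / (2 * \<nu>) + h' * \<nu> / 2)"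
    and "Z \<le> a" "Z' \<le> b" "0 \<le> Z'"
    and eta: "\<eta> = 1 / (sqrt T * L^3)" and a: "a = C^3 * T * L^6 / \<Lambda>"
    and b: "b = C^2 * T * L^2 / (4 * c^2 * Dsq * h * h')" and nu: "\<nu> = C * sqrt T * L / (2 * c * Dm * h')"
    and Dm: "Dm^2 = Dsq" and pos: "0 < \<Lambda>" "0 < c" "0 < Dm" "0 < h" "0 < h'" "0 < C" "0 < T" "0 < L"
    and "Dsq \<le> D^2"
  shows "R \<le> (C^3 + D^2/2) * sqrt T * L^3 + C/2 * sqrt T * L"
proof -
  have sT: "0 < sqrt T" "sqrt T * sqrt T = T" using pos by auto
  have "Dsq / (2 * \<eta>) = Dsq / 2 * sqrt T * L^3" unfolding eta using sT pos by (simp add: field_simps)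
  also have "\<dots> \<le> D^2 / 2 * sqrt T * L^3" using \<open>Dsq \<le> D^2\<close> sT pos by (intro mult_right_mono divide_right_mono) auto
  finally have s1: "Dsq / (2 * \<eta>) \<le> D^2 / 2 * sqrt T * L^3" .
  have "\<eta> * \<Lambda> * Z \<le> \<eta> * \<Lambda> * a" using \<open>Z \<le> a\<close> sT pos by (intro mult_left_mono) (auto simp: eta)
  also have "\<dots> = C^3 * sqrt T * L^3"
    using sT pos by (simp add: eta a field_simps power_add[symmetric])
  finally have s2: "\<eta> * \<Lambda> * Z \<le> C^3 * sqrt T * L^3" .
  have "c * Dm * (h * Z' / (2 * \<nu>)) \<le> c * Dm * (h * b / (2 * \<nu>))"
    using \<open>Z' \<le> b\<close> pos sT by (intro mult_left_mono divide_right_mono) (auto simp: nu)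
  also have "\<dots> = C * sqrt T * L / 4" unfolding b nu using sT pos Dm[symmetric]
    by (simp add: field_simps power2_eq_square)
  finally have s3: "c * Dm * (h * Z' / (2 * \<nu>)) \<le> C * sqrt T * L / 4" .
  have s4: "c * Dm * (h' * \<nu> / 2) = C * sqrt T * L / 4" unfolding nu using sT pos by (simp add: field_simps)
  from R have "R \<le> Dsq / (2 * \<eta>) + \<eta> * \<Lambda> * Z + (c * Dm * (h * Z' / (2 * \<nu>)) + c * Dm * (h' * \<nu> / 2))"
    by (simp only: distrib_left)
  also have "\<dots> \<le> D^2 / 2 * sqrt T * L^3 + C^3 * sqrt T * L^3 + (C * sqrt T * L / 4 + C * sqrt T * L / 4)"
    using s1 s2 s3 s4 by linarith
  finally show ?thesis by (simp add: algebra_simps)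
qed

context regret_constants
begin

text \<open>All constants are bounded by powers of \<open>cW\<close>, \<open>ndim\<close>, \<open>H\<close> and \<open>1/\<gamma>\<close>; the numerical
  factors are absorbed into the constant 65640 of the failure probability.\<close>

definition "ginv = 1 / \<gamma>"
definition "cW = Gc * kB^3 * \<kappa>^9 * ginv^3"
definition "ndim = real (max CARD('nx) CARD('nu))"

lemma ginv_ge_1: "1 \<le> ginv" unfolding ginv_def using gamma_pos gamma_less_1 by simp
lemma ndim_ge_1: "1 \<le> ndim" unfolding ndim_def by (simp add: le_max_iff_disj)

lemma cresp_eq: "cresp = \<kappa>^2 * kB * ginv" unfolding cresp_def ginv_def by simp
lemma cy_eq: "cy = \<kappa>^2 * ginv + 2 * kB^2 * \<kappa>^5 * ginv^2"
  unfolding cy_def cresp_eq ginv_def by (simp add: power2_eq_square power3_eq_cube algebra_simps)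
    (simp add: power_def)
lemma cv_eq: "cv = \<kappa> * cy + 2 * kB * \<kappa>^3 * ginv" unfolding cv_def ginv_def by simp

lemma kappa_pow_ge_1: "1 \<le> \<kappa>^2" "1 \<le> \<kappa>^3" using kappa_ge_1 by (simp_all add: one_le_power)
lemma kB_pow_ge_1: "1 \<le> kB^2" "1 \<le> kB^3" using kB_ge_1 by (simp_all add: one_le_power)

lemma cy_le: "cy \<le> 3 * kB^2 * \<kappa>^5 * ginv^2"
proof -
  have "\<kappa>^2 * ginv \<le> (\<kappa>^2 * ginv) * (kB^2 * \<kappa>^3 * ginv)"
    by (rule le_mult_of_one_le) (use kappa_nonneg ginv_ge_1 kappa_pow_ge_1 kB_pow_ge_1 in \<open>auto intro!: one_le_mult_real\<close>)
  also have "\<dots> = kB^2 * \<kappa>^5 * ginv^2" by (simp add: power2_eq_square power3_eq_cube algebra_simps) (simp add: power_def)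
  finally show ?thesis unfolding cy_eq by simp
qed

lemma cv_le: "cv \<le> 5 * kB^2 * \<kappa>^6 * ginv^2"
proof -
  have a: "\<kappa> * cy \<le> \<kappa> * (3 * kB^2 * \<kappa>^5 * ginv^2)" by (rule mult_left_mono[OF cy_le kappa_nonneg])
  have b: "2 * kB * \<kappa>^3 * ginv \<le> (2 * kB * \<kappa>^3 * ginv) * (kB * \<kappa>^3 * ginv)"
    by (rule le_mult_of_one_le) (use kappa_nonneg kB_nonneg ginv_ge_1 kappa_pow_ge_1 kB_ge_1 in \<open>auto intro!: one_le_mult_real\<close>)
  have "\<kappa> * (3 * kB^2 * \<kappa>^5 * ginv^2) + (2 * kB * \<kappa>^3 * ginv) * (kB * \<kappa>^3 * ginv) = 5 * kB^2 * \<kappa>^6 * ginv^2"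
    by (simp add: power2_eq_square power3_eq_cube algebra_simps) (simp add: power_def)
  then show ?thesis unfolding cv_eq using a b by linarith
qed

lemma cW_ge_1: "1 \<le> cW" unfolding cW_def using Gc_ge_1 kB_pow_ge_1 kappa_ge_1 ginv_ge_1 by (auto intro!: one_le_mult_real one_le_power)

lemma cy_pos: "0 < cy" unfolding cy_eq using kappa_ge_1 ginv_ge_1 kB_ge_1 by (auto intro!: add_pos_nonneg)
lemma cresp_pos: "0 < cresp" unfolding cresp_eq using kappa_ge_1 ginv_ge_1 kB_ge_1 by simp
lemma cgrad_entry_pos: "0 < cgrad_entry Gc" unfolding cgrad_entry_def using Gc_ge_1 cy_pos cresp_pos cv_nonneg kappa_nonneg by (auto intro!: mult_pos_pos add_pos_nonneg)
lemma cgrad_pos: "1 \<le> H \<Longrightarrow> 0 < cgrad" unfolding cgrad_def using cgrad_entry_pos by simp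
lemma clip_pos: "1 \<le> H \<Longrightarrow> 0 < clip" unfolding clip_def using Gc_ge_1 cy_pos cresp_pos cv_nonneg kappa_nonneg
  by (auto intro!: mult_pos_pos add_pos_nonneg)
lemma cvar_pos: "1 \<le> H \<Longrightarrow> 0 < cvar" unfolding cvar_def using cgrad_pos clip_pos
  by (auto intro!: mult_pos_pos add_pos_nonneg)
lemma diam2_pos: "0 < diam2" unfolding diam2_def using kB_ge_1 kappa_ge_1 gamma_pos by simp
lemma diam_pos: "0 < diam" unfolding diam_def using diam2_pos by simp

lemma cgrad_entry_le: "cgrad_entry Gc \<le> 13 * cW"
proof -
  have a: "cy * cresp \<le> 3 * kB^2 * \<kappa>^5 * ginv^2 * (\<kappa>^2 * kB * ginv)"
    unfolding cresp_eq by (rule mult_right_mono[OF cy_le]) (use kappa_nonneg kB_nonneg ginv_ge_1 in auto)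
  have a2: "3 * kB^2 * \<kappa>^5 * ginv^2 * (\<kappa>^2 * kB * ginv) \<le> (3 * kB^2 * \<kappa>^5 * ginv^2 * (\<kappa>^2 * kB * ginv)) * \<kappa>^2"
    by (rule le_mult_of_one_le) (use kappa_nonneg kB_nonneg ginv_ge_1 kappa_pow_ge_1 in auto)
  have c: "\<kappa> * cresp + 1 \<le> 2 * \<kappa>^3 * kB * ginv"
  proof -
    have "1 \<le> \<kappa>^3 * kB * ginv" using kappa_pow_ge_1 kB_ge_1 ginv_ge_1 by (auto intro!: one_le_mult_real)
    moreover have "\<kappa> * cresp = \<kappa>^3 * kB * ginv" unfolding cresp_eq by (simp add: power2_eq_square power3_eq_cube)
    moreover have "2 * \<kappa>^3 * kB * ginv = 2 * (\<kappa>^3 * kB * ginv)" by simp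
    ultimately show ?thesis by linarith
  qed
  have b: "cv * (\<kappa> * cresp + 1) \<le> 5 * kB^2 * \<kappa>^6 * ginv^2 * (2 * \<kappa>^3 * kB * ginv)"
    by (rule mult_mono[OF cv_le c]) (use cv_nonneg cresp_nonneg kappa_nonneg in auto)
  have e: "(3 * kB^2 * \<kappa>^5 * ginv^2 * (\<kappa>^2 * kB * ginv)) * \<kappa>^2 + 5 * kB^2 * \<kappa>^6 * ginv^2 * (2 * \<kappa>^3 * kB * ginv)
      = 13 * (kB^3 * \<kappa>^9 * ginv^3)"
    by (simp add: power2_eq_square power3_eq_cube algebra_simps) (simp add: power_def)
  have "cy * cresp + cv * (\<kappa> * cresp + 1) \<le> 13 * (kB^3 * \<kappa>^9 * ginv^3)" using a a2 b e by linarith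
  then have "Gc * (cy * cresp + cv * (\<kappa> * cresp + 1)) \<le> Gc * (13 * (kB^3 * \<kappa>^9 * ginv^3))"
    by (rule mult_left_mono) (use Gc_ge_1 in auto)
  then show ?thesis unfolding cgrad_entry_def cW_def by (simp add: algebra_simps)
qed

lemma clip_le: "clip \<le> 8 * H * cW"
proof -
  have a: "\<kappa> * cv \<le> \<kappa> * (5 * kB^2 * \<kappa>^6 * ginv^2)" by (rule mult_left_mono[OF cv_le kappa_nonneg])
  have a2: "3 * kB^2 * \<kappa>^5 * ginv^2 \<le> (3 * kB^2 * \<kappa>^5 * ginv^2) * \<kappa>^2"
    by (rule le_mult_of_one_le) (use kappa_nonneg kB_nonneg ginv_ge_1 kappa_pow_ge_1 in auto)
  have e: "(3 * kB^2 * \<kappa>^5 * ginv^2) * \<kappa>^2 + \<kappa> * (5 * kB^2 * \<kappa>^6 * ginv^2) = 8 * kB^2 * \<kappa>^7 * ginv^2"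
    by (simp add: power2_eq_square power3_eq_cube algebra_simps) (simp add: power_def)
  have s: "cy + \<kappa> * cv \<le> 8 * kB^2 * \<kappa>^7 * ginv^2" using cy_le a a2 e by linarith
  have "Gc * (cy + \<kappa> * cv) * cresp * H \<le> Gc * (8 * kB^2 * \<kappa>^7 * ginv^2) * (\<kappa>^2 * kB * ginv) * H"
    unfolding cresp_eq using Gc_ge_1 s kappa_nonneg kB_nonneg ginv_ge_1 by (intro mult_right_mono mult_left_mono) auto
  also have "\<dots> = 8 * H * cW" unfolding cW_def by (simp add: power2_eq_square power3_eq_cube algebra_simps) (simp add: power_def)
  finally show ?thesis unfolding clip_def .
qed

lemma cgrad_le: "cgrad \<le> 13 * ndim * H * cW"
proof -
  have "real H * (real CARD('nu) * real CARD('nx)) \<le> (real H * ndim)^2"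
  proof -
    have clip: "real CARD('nu) \<le> ndim" "real CARD('nx) \<le> ndim" unfolding ndim_def by auto
    have c2: "real CARD('nu) * real CARD('nx) \<le> ndim * ndim" using clip ndim_ge_1 by (intro mult_mono) auto
    have c3: "real H \<le> real H * real H" by (cases H) auto
    have "real H * (real CARD('nu) * real CARD('nx)) \<le> (real H * real H) * (ndim * ndim)"
      by (rule mult_mono[OF c3 c2]) auto
    then show ?thesis by (simp add: power2_eq_square algebra_simps)
  qed
  then have "sqrt (real H * (real CARD('nu) * real CARD('nx))) \<le> real H * ndim"
    using ndim_ge_1 by (metis real_sqrt_le_mono real_sqrt_abs abs_of_nonneg mult_nonneg_nonneg of_nat_0_le_iff order_trans zero_le_one)
  then have "cgrad \<le> real H * ndim * (13 * cW)"
    unfolding cgrad_def using cgrad_entry_le less_imp_le[OF cgrad_entry_pos] ndim_ge_1 by (intro mult_mono) auto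
  then show ?thesis by (simp add: algebra_simps)
qed

lemma diam2_le: "diam2 \<le> 16 * ndim * cW^2 / ginv^5"
proof -
  have "kB^2 * \<kappa>^6 * ginv \<le> (kB^2 * \<kappa>^6 * ginv) * (Gc^2 * kB^4 * \<kappa>^12)"
    by (rule le_mult_of_one_le) (use kB_nonneg kappa_nonneg ginv_ge_1 Gc_ge_1 kB_ge_1 kappa_ge_1 in \<open>auto intro!: one_le_mult_real one_le_power\<close>)
  also have "\<dots> = cW^2 / ginv^5" unfolding cW_def using ginv_ge_1
    by (simp add: power2_eq_square power3_eq_cube field_simps) (simp add: power_def)
  finally have a: "kB^2 * \<kappa>^6 * ginv \<le> cW^2 / ginv^5" .
  have "diam2 = 16 * real CARD('nx) * (kB^2 * \<kappa>^6 * ginv)" unfolding diam2_def ginv_def by simp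
  also have "\<dots> \<le> 16 * ndim * (cW^2 / ginv^5)"
    using a kB_nonneg kappa_nonneg ginv_ge_1 by (intro mult_mono mult_left_mono) (auto simp: ndim_def)
  finally show ?thesis by simp
qed

lemma cvar_le:
  assumes H1: "1 \<le> H"
  shows "cvar \<le> 1465 * (ndim^2 * real H^4 * cW^2)"
proof -
  define X where "X = ndim^2 * real H^3 * cW^2"
  have h1: "1 \<le> real H" using H1 by simp
  have W0: "0 \<le> cW" using cW_ge_1 by simp
  have X0: "0 \<le> X" unfolding X_def using W0 by simp
  have Gsq: "cgrad^2 \<le> (13 * ndim * H * cW)^2" using cgrad_le cgrad_nonneg by (intro power_mono) auto
  have cG: "clip * (real H + 1) * cgrad \<le> (8 * H * cW) * (2 * real H) * (13 * ndim * H * cW)"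
  proof (rule mult_mono)
    show "clip * (real H + 1) \<le> 8 * H * cW * (2 * real H)"
      using clip_le clip_nonneg h1 by (intro mult_mono) auto
  qed (use cgrad_le cgrad_nonneg h1 W0 ndim_ge_1 in auto)
  have e1: "(13 * ndim * H * cW)^2 \<le> 169 * X"
  proof -
    have "(13 * ndim * H * cW)^2 = 169 * (ndim^2 * real H^2 * cW^2)" by (simp add: power_mult_distrib)
    also have "real H^2 \<le> real H^3" using h1 by (intro power_increasing) auto
    then have "ndim^2 * real H^2 * cW^2 \<le> X" unfolding X_def using W0 by (intro mult_right_mono mult_left_mono) auto
    finally show ?thesis by simp
  qed
  have e2: "(8 * H * cW) * (2 * real H) * (13 * ndim * H * cW) \<le> 208 * X"
  proof -
    have "(8 * H * cW) * (2 * real H) * (13 * ndim * H * cW) = 208 * (ndim * real H^3 * cW^2)"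
      by (simp add: power2_eq_square power3_eq_cube algebra_simps)
    also have "ndim * real H^3 * cW^2 \<le> X" unfolding X_def using ndim_ge_1 W0 h1
      by (intro mult_right_mono) (auto simp: power2_eq_square)
    finally show ?thesis by simp
  qed
  have s0: "cgrad^2 / 2 + clip * (real H + 1) * cgrad \<le> 293 * X" using Gsq cG e1 e2 X0 by linarith
  have s: "cgrad^2 / 2 + clip * real (H + 1) * cgrad \<le> 293 * X" using s0 by (simp add: add.commute)
  have t: "real (3*H+2) \<le> 5 * real H" using h1 by simp
  have "cvar \<le> (293 * X) * (5 * real H)"
    unfolding cvar_def by (rule mult_mono[OF s t]) (use X0 in auto)
  also have "\<dots> = 1465 * (ndim^2 * real H^4 * cW^2)" unfolding X_def by (simp add: power_def algebra_simps)
  finally show ?thesis .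
qed

lemma two_cvar_le:
  assumes H1: "1 \<le> H" and L1: "1 \<le> L" and HL: "real H \<le> 3 * L * ginv"
  shows "2 * cvar \<le> (65640 * ndim^2 * cW^2 * ginv^2)^3 * L^6"
proof -
  have W0: "0 \<le> cW" using cW_ge_1 by simp
  have h4: "real H^4 \<le> (3 * L * ginv)^4" using HL by (intro power_mono) auto
  have "2 * cvar \<le> 2 * (1465 * (ndim^2 * real H^4 * cW^2))" by (rule mult_left_mono[OF cvar_le[OF H1]]) simp
  also have "\<dots> \<le> 2 * (1465 * (ndim^2 * (3 * L * ginv)^4 * cW^2))"
    using h4 by (intro mult_left_mono mult_right_mono) auto
  also have "\<dots> = 237330 * (ndim^2 * cW^2 * ginv^4 * L^4)" by (simp add: power_mult_distrib algebra_simps)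
  also have "\<dots> \<le> 65640^3 * (ndim^2 * cW^2 * ginv^4 * L^4)" by (intro mult_right_mono) auto
  also have "\<dots> \<le> 65640^3 * ((ndim^2 * cW^2 * ginv^4 * L^4) * (ndim^4 * cW^4 * ginv^2 * L^2))"
    using ndim_ge_1 cW_ge_1 ginv_ge_1 L1 by (intro mult_left_mono le_mult_of_one_le) (auto intro!: one_le_mult_real one_le_power)
  also have "\<dots> = (65640 * ndim^2 * cW^2 * ginv^2)^3 * L^6" by (simp add: power_mult_distrib power_def algebra_simps)
  finally show ?thesis .
qed

lemma initial_drift_term_le:
  assumes H1: "1 \<le> H" and L1: "1 \<le> L" and HL: "real H \<le> 3 * L * ginv" and LT: "L^3 \<le> 27 * T"
  shows "8 * real H * real (3*H+2) * real (H+1) * clip^2 * diam2 \<le> (65640 * ndim^2 * cW^2 * ginv^2)^2 * T * L^2"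
proof -
  have h1: "1 \<le> real H" using H1 by simp
  have W0: "0 \<le> cW" using cW_ge_1 by simp
  have u0: "0 < ginv" using ginv_ge_1 by simp
  have T0: "0 \<le> T"
  proof -
    have "1 \<le> L^3" using L1 by (rule one_le_power)
    then show ?thesis using LT by linarith
  qed
  have c1sq: "clip^2 \<le> (8 * H * cW)^2" using clip_le clip_nonneg by (intro power_mono) auto
  have Dsq0: "0 \<le> diam2" unfolding diam2_def using gamma_pos by simp
  have "8 * real H * real (3*H+2) * real (H+1) * clip^2 * diam2 \<le> 8 * real H * (5 * real H) * (2 * real H) * (8 * H * cW)^2 * (16 * ndim * cW^2 / ginv^5)"
    using h1 c1sq diam2_le Dsq0 by (intro mult_mono) auto
  also have "\<dots> = 81920 * ndim * cW^4 * (real H^5 / ginv^5)" by (simp add: power_def algebra_simps)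
  also have "\<dots> \<le> 81920 * ndim * cW^4 * (243 * L^5)"
  proof (intro mult_left_mono)
    have "real H^5 \<le> (3 * L * ginv)^5" using HL by (intro power_mono) auto
    then have "real H^5 / ginv^5 \<le> (3 * L * ginv)^5 / ginv^5" using u0 by (intro divide_right_mono) auto
    also have "\<dots> = 243 * L^5" using u0 by (simp add: power_mult_distrib)
    finally show "real H^5 / ginv^5 \<le> 243 * L^5" .
  qed (use ndim_ge_1 W0 in auto)
  also have "\<dots> = 19906560 * ndim * cW^4 * L^2 * L^3" by (simp add: power_def algebra_simps)
  also have "\<dots> \<le> 19906560 * ndim * cW^4 * L^2 * (27 * T)"
    using LT ndim_ge_1 W0 by (intro mult_left_mono) auto
  also have "\<dots> = 537477120 * (ndim * cW^4 * L^2 * T)" by simp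
  also have "\<dots> \<le> 65640^2 * (ndim * cW^4 * L^2 * T)"
    using ndim_ge_1 W0 T0 by (intro mult_right_mono) auto
  also have "\<dots> \<le> 65640^2 * ((ndim * cW^4 * L^2 * T) * (ndim^3 * ginv^4))"
    using ndim_ge_1 W0 ginv_ge_1 L1 T0 by (intro mult_left_mono le_mult_of_one_le) (auto intro!: one_le_mult_real one_le_power mult_nonneg_nonneg)
  also have "\<dots> = (65640 * ndim^2 * cW^2 * ginv^2)^2 * T * L^2" by (simp add: power_def algebra_simps)
  finally show ?thesis .
qed

end

section \<open>The high-probability regret bound\<close>

lemma ln_horizon_bounds:
  fixes \<gamma> :: real and T :: nat
  assumes "0 < \<gamma>" "\<gamma> < 1" "3 \<le> T"
  shows "1 \<le> ln (real T)" and "ln (real T) ^ 3 \<le> 27 * real T"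
    and "1 \<le> nat \<lceil>2 / \<gamma> * ln (real T)\<rceil>" and "real (nat \<lceil>2 / \<gamma> * ln (real T)\<rceil>) \<le> 3 * ln (real T) / \<gamma>"
proof -
  define L where "L = ln (real T)"
  have T0: "0 < real T" using assms(3) by simp
  have "ln (exp 1) \<le> ln (3::real)" using exp_le by (subst ln_le_cancel_iff) auto
  also have "\<dots> \<le> L" unfolding L_def using assms(3) by (subst ln_le_cancel_iff) auto
  finally have L1: "1 \<le> L" by simp
  then show "1 \<le> ln (real T)" by (simp add: L_def)
  have "L / 3 = ln (root 3 (real T))" unfolding L_def using T0 by (simp add: ln_root)
  also have "\<dots> \<le> root 3 (real T) - 1" using T0 by (intro ln_le_minus_one) simp
  finally have "L^3 \<le> (3 * root 3 (real T))^3" using L1 by (intro power_mono) auto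
  also have "\<dots> = 27 * real T" using T0 by (simp add: power_mult_distrib real_root_pow_pos)
  finally show "ln (real T) ^ 3 \<le> 27 * real T" by (simp add: L_def)
  have x0: "0 < 2 / \<gamma> * L" using assms(1) L1 by simp
  then have "1 \<le> \<lceil>2 / \<gamma> * L\<rceil>" by simp
  then show "1 \<le> nat \<lceil>2 / \<gamma> * ln (real T)\<rceil>" by (simp add: L_def le_nat_iff)
  have "real (nat \<lceil>2 / \<gamma> * L\<rceil>) \<le> 2 / \<gamma> * L + 1" using x0 of_int_ceiling_le_add_one by simp
  also have "\<dots> \<le> 3 * L / \<gamma>" using L1 assms(1,2) by (simp add: field_simps)
  finally show "real (nat \<lceil>2 / \<gamma> * ln (real T)\<rceil>) \<le> 3 * ln (real T) / \<gamma>" by (simp add: L_def)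
qed

lemma pow4_le_max_pow:
  fixes \<sigma> :: real
  assumes "0 \<le> \<sigma>"
  shows "\<sigma>^4 \<le> (max \<sigma> (\<sigma>^4))^3" and "\<sigma>^4 \<le> (max \<sigma> (\<sigma>^4))^2"
proof -
  have "\<sigma>^4 \<le> \<sigma>^3 \<and> \<sigma>^4 \<le> \<sigma>^2 \<or> 1 \<le> \<sigma>^4"
    using assms by (cases "\<sigma> \<le> 1") (auto intro: power_decreasing one_le_power)
  moreover have "\<sigma>^3 \<le> (max \<sigma> (\<sigma>^4))^3" "\<sigma>^2 \<le> (max \<sigma> (\<sigma>^4))^2"
    using assms by (auto intro: power_mono)
  moreover have "x \<le> x^3" "x \<le> x^2" if "1 \<le> x" for x :: real
    using power_increasing[OF _ that, of 1 3] power_increasing[OF _ that, of 1 2] by simp_all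
  ultimately show "\<sigma>^4 \<le> (max \<sigma> (\<sigma>^4))^3" "\<sigma>^4 \<le> (max \<sigma> (\<sigma>^4))^2"
    by (smt (verit, best))+
qed

text \<open>The argument yields the regret bound with \<open>C^3\<close> in place of the coefficient
  \<open>2 sqrt 3 Gc C^3 / sqrt \<gamma>\<close> of the statement.\<close>

lemma cube_le_regret_coeff:
  fixes Gc \<gamma> :: real
  assumes "1 \<le> Gc" "0 < \<gamma>" "\<gamma> < 1" "0 \<le> C"
  shows "C^3 \<le> 2 * sqrt 3 * Gc * C^3 / sqrt \<gamma>"
proof -
  have "1 \<le> 2 * sqrt 3" by (simp add: order.trans[OF _ mult_right_mono[of 1 2 "sqrt 3"]])
  then have "1 * 1 \<le> (2 * sqrt 3 * Gc) * (1 / sqrt \<gamma>)"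
    using assms by (intro mult_mono one_le_mult_real) auto
  then show ?thesis using assms(4) le_mult_of_one_le[of "C^3" "2 * sqrt 3 * Gc / sqrt \<gamma>"] by (simp add: mult.commute)
qed

lemma (in regret_constants) diam2_le_square:
  "diam2 \<le> (4 * kB * \<kappa>^3 * sqrt ndim / \<gamma>)^2"
proof -
  have "diam2 \<le> 16 * kB^2 * \<kappa>^6 * ndim / \<gamma>"
    unfolding diam2_def ndim_def using gamma_pos by (intro divide_right_mono mult_left_mono) auto
  also have "\<dots> \<le> 16 * kB^2 * \<kappa>^6 * ndim / \<gamma>^2"
    using gamma_pos gamma_less_1 ndim_ge_1 by (intro divide_left_mono) (auto simp: power2_eq_square)
  also have "\<dots> = (4 * kB * \<kappa>^3 * sqrt ndim / \<gamma>)^2"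
    using ndim_ge_1 by (simp add: power_mult_distrib power_divide)
  finally show ?thesis .
qed

lemma (in regret_constants) failure_const_le:
  assumes "0 \<le> s" "0 < C"
  shows "65640 * ndim^2 * cW^2 * ginv^2 * s / C
    \<le> 65640 * s * ndim^2 * Gc^2 * kB^6 * \<kappa>^18 / (C * \<gamma>^8 * (1 - \<gamma>)^4)"
proof -
  have "65640 * ndim^2 * cW^2 * ginv^2 * s / C = 65640 * s * ndim^2 * Gc^2 * kB^6 * \<kappa>^18 / (C * \<gamma>^8)"
    using gamma_pos by (simp add: cW_def ginv_def field_simps power_mult_distrib)
  also have "\<dots> \<le> 65640 * s * ndim^2 * Gc^2 * kB^6 * \<kappa>^18 / (C * \<gamma>^8 * (1 - \<gamma>)^4)"
    using assms gamma_pos gamma_less_1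
    by (intro divide_left_mono mult_left_mono mult_pos_pos) (auto intro: power_le_one)
  finally show ?thesis .
qed

locale ogd_experiment = regret_constants A B K H kB \<kappa> \<gamma> Gc
  for A :: "real^'nx::finite^'nx" and B :: "real^'nu::finite^'nx" and K H kB \<kappa> \<gamma> Gc +
  fixes \<Omega> :: "'w measure" and w :: "nat \<Rightarrow> 'w \<Rightarrow> real^'nx" and \<sigma>w :: real
    and c :: "nat \<Rightarrow> real ^'nx \<Rightarrow> real ^'nu \<Rightarrow> real"
    and Minit :: "int \<Rightarrow> ('nx,'nu) pol" and M :: "('nx,'nu) pol" and T :: nat and L :: real
  assumes prob: "prob_space \<Omega>" and w_meas: "\<And>t. w t \<in> borel_measurable \<Omega>"
    and fourth_moment: "\<And>t. (\<integral>\<^sup>+\<omega>. ennreal (norm (w t \<omega>) ^ 4) \<partial>\<Omega>) \<le> ennreal (\<sigma>w ^ 4)"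
    and sigma_nonneg: "0 \<le> \<sigma>w"
    and cost: "cost_assm Gc c"
    and Minit: "\<And>s. - int H - 1 \<le> s \<Longrightarrow> s \<le> 0 \<Longrightarrow> Minit s \<in> S" and M_mem: "M \<in> S"
    and T_pos: "0 < T" and L_ge_1: "1 \<le> L" and L_cube_le: "L^3 \<le> 27 * real T"
    and H_ge_1: "1 \<le> H" and H_le: "real H \<le> 3 * L / \<gamma>"
begin

definition "eta = 1 / (sqrt (real T) * L^3)"

lemma ogd_run: "ogd_run A B K H kB \<kappa> \<gamma> Gc c eta Minit M"
  by (unfold_locales) (use cost Minit M_mem T_pos L_ge_1 in \<open>auto simp: eta_def\<close>)

lemma prob_moments_le:
  assumes "0 < a" "0 < b"
  defines "E \<equiv> {\<omega>\<in>space \<Omega>. noise_moment4 w T \<omega> \<le> a \<and> noise_moment4 w H \<omega> \<le> b}"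
  shows "E \<in> sets \<Omega>" and "1 - (real T * \<sigma>w^4 / a + real H * \<sigma>w^4 / b) \<le> measure \<Omega> E"
proof -
  interpret prob_space \<Omega> by (rule prob)
  have moment_meas [measurable]: "noise_moment4 w n \<in> borel_measurable \<Omega>" for n
    using w_meas unfolding noise_moment4_def by measurable
  show "E \<in> sets \<Omega>" unfolding E_def by measurable
  have markov: "measure \<Omega> {\<omega>\<in>space \<Omega>. c < noise_moment4 w n \<omega>} \<le> real n * \<sigma>w^4 / c" if "0 < c" for n c
    using nn_integral_noise_moment4_le[where w=w, OF w_meas fourth_moment] that
    by (intro markov_inequality_nn_integral[OF prob moment_meas]) (auto simp: noise_moment4_def intro: sum_nonneg)
  have "space \<Omega> - E = {\<omega>\<in>space \<Omega>. a < noise_moment4 w T \<omega>} \<union> {\<omega>\<in>space \<Omega>. b < noise_moment4 w H \<omega>}"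
    unfolding E_def by auto
  then have "measure \<Omega> (space \<Omega> - E)
      \<le> measure \<Omega> {\<omega>\<in>space \<Omega>. a < noise_moment4 w T \<omega>} + measure \<Omega> {\<omega>\<in>space \<Omega>. b < noise_moment4 w H \<omega>}"
    by (simp add: measure_Un_le)
  with markov[of a T] markov[of b H] prob_compl[OF \<open>E \<in> sets \<Omega>\<close>] assms(1,2)
  show "1 - (real T * \<sigma>w^4 / a + real H * \<sigma>w^4 / b) \<le> measure \<Omega> E"
    by linarith
qed

text \<open>Markov thresholds for the two fourth-moment sums, and the Young parameter \<open>\<nu>\<close>, chosen so
  that each term of the bound \<open>regret_le_noise_moments\<close> contributes its share.\<close>

definition "markov_a C = C^3 * real T * L^6 / cvar"
definition "markov_b C = C^2 * real T * L^2 / (4 * clip^2 * diam2 * real (3*H+2) * real (H+1))"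
definition "young_nu C = C * sqrt (real T) * L / (2 * clip * diam * real (H+1))"

lemma constants_pos: "0 < cvar" "0 < clip" "0 < diam" "0 < diam2" "0 < real T" "0 < L"
  using cvar_pos[OF H_ge_1] clip_pos[OF H_ge_1] diam_pos diam2_pos T_pos L_ge_1 by auto

lemma thresholds_pos:
  assumes "0 < C" shows "0 < markov_a C" "0 < markov_b C" "0 < young_nu C"
  using constants_pos assms by (simp_all add: markov_a_def markov_b_def young_nu_def)

lemma markov_terms_le:
  assumes C: "0 < C" and small: "65640 * ndim^2 * cW^2 * ginv^2 * max \<sigma>w (\<sigma>w^4) < C"
  shows "real T * \<sigma>w^4 / markov_a C + real H * \<sigma>w^4 / markov_b C
    \<le> 65640 * ndim^2 * cW^2 * ginv^2 * max \<sigma>w (\<sigma>w^4) / C"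
proof -
  define J where "J = 8 * real H * real (3*H+2) * real (H+1) * clip^2 * diam2"
  have H_le': "real H \<le> 3 * L * ginv" using H_le by (simp add: ginv_def)
  have "\<sigma>w^4 * cvar / (C^3 * L^6) + J * \<sigma>w^4 / (2 * C^2 * real T * L^2)
      \<le> 65640 * ndim^2 * cW^2 * ginv^2 * max \<sigma>w (\<sigma>w^4) / C"
    using pow4_le_max_pow[OF sigma_nonneg] sigma_nonneg C constants_pos small
      two_cvar_le[OF H_ge_1 L_ge_1 H_le'] initial_drift_term_le[OF H_ge_1 L_ge_1 H_le' L_cube_le]
    by (intro failure_prob_arith) (auto simp: J_def)
  moreover have "real T * \<sigma>w^4 / markov_a C = \<sigma>w^4 * cvar / (C^3 * L^6)"
    and "real H * \<sigma>w^4 / markov_b C = J * \<sigma>w^4 / (2 * C^2 * real T * L^2)"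
    using constants_pos C by (simp_all add: markov_a_def markov_b_def J_def field_simps)
  ultimately show ?thesis by simp
qed

lemma regret_le_on_moment_event:
  assumes C: "0 < C"
    and "noise_moment4 w T \<omega> \<le> markov_a C" "noise_moment4 w H \<omega> \<le> markov_b C"
  shows "(\<Sum>t<T. Fsur A B K H c w (Mfull A B K H c w eta S Minit \<omega>) t \<omega>) - (\<Sum>t<T. fsur A B K H c w t M \<omega>)
    \<le> (C^3 + (4 * kB * \<kappa>^3 * sqrt ndim / \<gamma>)^2 / 2) * sqrt (real T) * L^3 + C / 2 * sqrt (real T) * L"
proof -
  interpret ogd_run A B K H w \<omega> kB \<kappa> \<gamma> Gc c eta Minit M by (rule ogd_run)
  show ?thesis
    by (rule regret_bound_arith[OF regret_le_noise_moments[OF thresholds_pos(3)[OF C]]])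
      (use assms constants_pos diam2_le_square in \<open>auto simp: noise_moment4_def eta_def
        markov_a_def markov_b_def young_nu_def diam_def intro: sum_nonneg\<close>)
qed

lemma regret_high_probability:
  assumes C: "0 < C"
  shows "\<exists>E\<in>sets \<Omega>.
      1 - 65640 * max \<sigma>w (\<sigma>w^4) * ndim^2 * Gc^2 * kB^6 * \<kappa>^18 / (C * \<gamma>^8 * (1 - \<gamma>)^4) \<le> measure \<Omega> E \<and>
      (\<forall>\<omega>\<in>E. (\<Sum>t<T. Fsur A B K H c w (Mfull A B K H c w eta S Minit \<omega>) t \<omega>) - (\<Sum>t<T. fsur A B K H c w t M \<omega>)
         \<le> (2 * sqrt 3 * Gc * C^3 / sqrt \<gamma> + (4 * kB * \<kappa>^3 * sqrt ndim / \<gamma>)^2 / 2) * sqrt (real T) * L^3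
           + C / 2 * sqrt (real T) * L)"
    (is "\<exists>E\<in>sets \<Omega>. 1 - ?P \<le> _ \<and> (\<forall>\<omega>\<in>E. ?R \<omega> \<le> ?bound)")
proof (cases "65640 * ndim^2 * cW^2 * ginv^2 * max \<sigma>w (\<sigma>w^4) < C")
  case False
  then have "1 \<le> 65640 * ndim^2 * cW^2 * ginv^2 * max \<sigma>w (\<sigma>w^4) / C" using C by simp
  with failure_const_le[OF _ C, of "max \<sigma>w (\<sigma>w^4)"] sigma_nonneg
  have "1 - ?P \<le> measure \<Omega> {}" by force
  then show ?thesis by blast
next
  case True
  define E where "E = {\<omega>\<in>space \<Omega>. noise_moment4 w T \<omega> \<le> markov_a C \<and> noise_moment4 w H \<omega> \<le> markov_b C}"
  note ab = thresholds_pos(1,2)[OF C]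
  have "1 - ?P \<le> measure \<Omega> E"
    using prob_moments_le(2)[OF ab] markov_terms_le[OF C True]
      failure_const_le[OF _ C, of "max \<sigma>w (\<sigma>w^4)"] sigma_nonneg
    unfolding E_def by linarith
  moreover have "?R \<omega> \<le> ?bound" if "\<omega> \<in> E" for \<omega>
  proof -
    have "?R \<omega> \<le> (C^3 + (4 * kB * \<kappa>^3 * sqrt ndim / \<gamma>)^2 / 2) * sqrt (real T) * L^3 + C / 2 * sqrt (real T) * L"
      using that C by (intro regret_le_on_moment_event) (auto simp: E_def)
    also have "\<dots> \<le> ?bound"
      using cube_le_regret_coeff[OF Gc_ge_1 gamma_pos gamma_less_1, of C] constants_pos C
      by (intro add_mono mult_right_mono) auto
    finally show ?thesis .
  qed
  ultimately show ?thesis using prob_moments_le(1)[OF ab] unfolding E_def by blast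
qed

end

theorem proposition3:
  fixes A :: "real ^'nx::finite ^'nx" and B :: "real ^'nu::finite ^'nx" and K :: "real ^'nx ^'nu"
    and c :: "nat \<Rightarrow> real ^'nx \<Rightarrow> real ^'nu \<Rightarrow> real"
    and \<Omega> :: "'w measure" and w :: "nat \<Rightarrow> 'w \<Rightarrow> real ^'nx"
    and Minit :: "int \<Rightarrow> ('nx,'nu) pol" and M :: "('nx,'nu) pol"
    and \<kappa> \<gamma> Gc \<sigma>w C :: real and T :: nat
  assumes "prob_space \<Omega>"
    and A1: "cost_assm Gc c"
    and w_meas: "\<And>t. w t \<in> borel_measurable \<Omega>"
    and A2: "\<And>t. (\<integral>\<^sup>+\<omega>. ennreal (norm (w t \<omega>) ^ 4) \<partial>\<Omega>) \<le> ennreal (\<sigma>w ^ 4)"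
    and "0 \<le> \<sigma>w"
    and "0 < \<gamma>" "\<gamma> < 1"
    and stab: "strongly_stable \<kappa> \<gamma> A B K"
    and "T \<ge> 3" and "C > 0"
    and Minit: "\<And>s. - int (nat \<lceil>2 / \<gamma> * ln (real T)\<rceil>) - 1 \<le> s \<Longrightarrow> s \<le> 0 \<Longrightarrow>
                 Minit s \<in> Mset (nat \<lceil>2 / \<gamma> * ln (real T)\<rceil>) (kappaB B) \<kappa> \<gamma>"
    and M: "M \<in> Mset (nat \<lceil>2 / \<gamma> * ln (real T)\<rceil>) (kappaB B) \<kappa> \<gamma>"
  shows "let H = nat \<lceil>2 / \<gamma> * ln (real T)\<rceil>;
             \<eta> = 1 / (sqrt (real T) * ln (real T) ^ 3);
             S = Mset H (kappaB B) \<kappa> \<gamma>;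
             n = max CARD('nx) CARD('nu);
             D = 4 * kappaB B * \<kappa>^3 * sqrt (real n) / \<gamma>;
             \<sigma>14 = max \<sigma>w (\<sigma>w ^ 4);
             Ms = Mfull A B K H c w \<eta> S Minit
         in \<exists>E \<in> sets \<Omega>.
              prob_space.prob \<Omega> E \<ge> 1 - 65640 * \<sigma>14 * real n ^ 2 * Gc^2 * kappaB B ^ 6 * \<kappa> ^ 18
                                       / (C * \<gamma> ^ 8 * (1 - \<gamma>) ^ 4)
            \<and> (\<forall>\<omega>\<in>E.
                 (\<Sum>t<T. Fsur A B K H c w (\<lambda>s. Ms \<omega> s) t \<omega>) - (\<Sum>t<T. fsur A B K H c w t M \<omega>)
                 \<le> (2 * sqrt 3 * Gc * C ^ 3 / sqrt \<gamma> + D^2 / 2) * sqrt (real T) * ln (real T) ^ 3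
                   + C / 2 * sqrt (real T) * ln (real T))"
proof -
  let ?H = "nat \<lceil>2 / \<gamma> * ln (real T)\<rceil>"
  note horizon = ln_horizon_bounds[OF \<open>0 < \<gamma>\<close> \<open>\<gamma> < 1\<close> \<open>T \<ge> 3\<close>]
  note stable = strongly_stableD[OF stab \<open>\<gamma> < 1\<close>]
  interpret ogd_experiment A B K ?H "kappaB B" \<kappa> \<gamma> Gc \<Omega> w \<sigma>w c Minit M T "ln (real T)"
  proof (intro ogd_experiment.intro ogd_experiment_axioms.intro regret_constants.intro
      regret_constants_axioms.intro stable_system.intro)
    show "1 \<le> kappaB B" "opnorm B \<le> kappaB B" by (simp_all add: kappaB_def)
    show "1 \<le> Gc" by (rule cost_assm_Gc_ge_1[OF A1])
    show "0 < T" using \<open>T \<ge> 3\<close> by simp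
    show "\<And>s. - int (nat \<lceil>2 / \<gamma> * ln (real T)\<rceil>) - 1 \<le> s \<Longrightarrow> s \<le> 0 \<Longrightarrow>
        Minit s \<in> Mset (nat \<lceil>2 / \<gamma> * ln (real T)\<rceil>) (kappaB B) \<kappa> \<gamma>"
      by (fact Minit)
  qed (fact assms horizon stable)+
  from regret_high_probability[OF \<open>C > 0\<close>] show ?thesis
    unfolding Let_def eta_def ndim_def by simp
qed

end
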